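(* Let $U\subset S^1$ be a non-empty connected open subset. Then: (i) if $U\subset(0,\pi)$, then $\widetilde{\mathscr O}_{\mathrm{per}}(U)$ is the ring of germs at $v=0$ of holomorphic functions on punctured neighbourhoods of $0$ in the $v$-plane, $\mathscr A^{\leqslant 0}_{\mathrm{per}}(U)=\mathbb C\{v\}$ and $\mathscr A^{<0}_{\mathrm{per}}(U)=v\,\mathbb C\{v\}$; (ii) if $U\subset(-\pi,0)$, then $\widetilde{\mathscr O}_{\mathrm{per}}(U)$ is the ring of germs at $u=0$ of holomorphic functions on punctured neighbourhoods of $0$ in the $u$-plane, $\mathscr A^{\leqslant 0}_{\mathrm{per}}(U)=\mathbb C\{u\}$ and $\mathscr A^{<0}_{\mathrm{per}}(U)=u\,\mathbb C\{u\}$; (iii) if $e^{0}\in U$ or $e^{\pi\mathrm i}\in U$, then $\widetilde{\mathscr O}_{\mathrm{per}}(U)$ is the ring of holomorphic functions of $u$ on $\mathbb C^*_u$, $\mathscr A^{\leqslant 0}_{\mathrm{per}}(U)=\mathbb C$ and $\mathscr A^{<0}_{\mathrm{per}}(U)=0$. Here these rings of functions of $u$ or $v$ are embedded in $\widetilde{\mathscr O}(U)$ via $u=\exp(2\pi\mathrm i t^{-1})$, $v=u^{-1}$.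
   Context: Let $t$ be a complex coordinate, $s=t^{-1}$, and $S^1=\{e^{\mathrm i\theta}\}$ the circle of directions at $t=0$; for real $a<b$ put $(a,b)=\{e^{\mathrm i\theta}: a<\theta<b\}$. Let $\widetilde{\mathbb C}=\{(t,e^{\mathrm i\theta})\in\mathbb C\times S^1: t=|t|e^{\mathrm i\theta}\}$ be the real oriented blow-up of $\mathbb C$ at $0$, with inclusions $\widetilde\jmath:\mathbb C^*\to\widetilde{\mathbb C}$, $t\mapsto (t,t/|t|)$, and $\widetilde\imath:S^1\to\widetilde{\mathbb C}$, $e^{\mathrm i\theta}\mapsto(0,e^{\mathrm i\theta})$. Put $\widetilde{\mathscr O}=\widetilde\imath^{-1}\widetilde\jmath_*\mathscr O_{\mathbb C^*}$ (germs along $S^1$ of holomorphic functions on sectors at $t=0$). Let $\mathscr A^{\leqslant0}\subset\widetilde{\mathscr O}$ (resp. $\mathscr A^{<0}$) be the subsheaf of functions of moderate growth (resp. rapid decay) as $t\to0$: on every closed subsector one has $|f|\le C|t|^{-N}$ for some $C,N$ (resp. $|f|\le C_N|t|^N$ for every $N$). Composition with $t\mapsto t/(1+t)$ (i.e. $s\mapsto s+1$) induces a ring automorphism $\widetilde\phi_t$ of $\widetilde{\mathscr O}$ preserving $\mathscr A^{\leqslant0}$ and $\mathscr A^{<0}$. Define $\widetilde{\mathscr O}_{\mathrm{per}}$, $\mathscr A^{\leqslant0}_{\mathrm{per}}$, $\mathscr A^{<0}_{\mathrm{per}}$ as the kernels of $\widetilde\phi_t-\mathrm{id}$ on $\widetilde{\mathscr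 O}$, $\mathscr A^{\leqslant0}$, $\mathscr A^{<0}$ respectively. Set $u=\exp(2\pi\mathrm i s)=\exp(2\pi\mathrm i t^{-1})$ and $v=u^{-1}$. *)

theory Defs
  imports "HOL-Complex_Analysis.Complex_Analysis"
begin

definition ucoord :: "complex \<Rightarrow> complex" where
  "ucoord t = exp (2 * of_real pi * \<i> / t)"

definition vcoord :: "complex \<Rightarrow> complex" where
  "vcoord t = inverse (ucoord t)"

definition arc_dir :: "real \<Rightarrow> real \<Rightarrow> complex set" where
  "arc_dir a b = {cis \<theta> | \<theta>. a < \<theta> \<and> \<theta> < b}"

text \<open>Omega (an open subset of C*) together with U is a neighbourhood of U in the real
  oriented blow-up: around every direction of U it contains an open sector.\<close>
definition sector_nbhd :: "complex set \<Rightarrow> complex set \<Rightarrow> bool" where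
  "sector_nbhd U \<Omega> \<longleftrightarrow> open \<Omega> \<and> 0 \<notin> \<Omega> \<and>
     (\<forall>\<theta>. cis \<theta> \<in> U \<longrightarrow> (\<exists>r>0. \<exists>\<epsilon>>0. \<forall>\<rho> \<phi>. 0 < \<rho> \<and> \<rho> < r \<and> \<bar>\<phi> - \<theta>\<bar> < \<epsilon>
         \<longrightarrow> complex_of_real \<rho> * cis \<phi> \<in> \<Omega>))"

text \<open>f represents a section of O-tilde over U.\<close>
definition holo_section :: "complex set \<Rightarrow> (complex \<Rightarrow> complex) \<Rightarrow> bool" where
  "holo_section U f \<longleftrightarrow> (\<exists>\<Omega>. sector_nbhd U \<Omega> \<and> f holomorphic_on \<Omega>)"

definition germ_eq :: "complex set \<Rightarrow> (complex \<Rightarrow> complex) \<Rightarrow> (complex \<Rightarrow> complex) \<Rightarrow> bool" where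
  "germ_eq U f g \<longleftrightarrow> (\<exists>\<Omega>. sector_nbhd U \<Omega> \<and> (\<forall>t\<in>\<Omega>. f t = g t))"

text \<open>Kernel of phi_t - id : f(t/(1+t)) = f(t) as germs along U.\<close>
definition per_section :: "complex set \<Rightarrow> (complex \<Rightarrow> complex) \<Rightarrow> bool" where
  "per_section U f \<longleftrightarrow> holo_section U f \<and> germ_eq U (\<lambda>t. f (t / (1 + t))) f"

definition moderate_section :: "complex set \<Rightarrow> (complex \<Rightarrow> complex) \<Rightarrow> bool" where
  "moderate_section U f \<longleftrightarrow> holo_section U f \<and>
     (\<forall>\<theta>. cis \<theta> \<in> U \<longrightarrow> (\<exists>\<epsilon>>0. \<exists>r>0. \<exists>C N. \<forall>\<rho> \<phi>. 0 < \<rho> \<and> \<rho> < r \<and> \<bar>\<phi> - \<theta>\<bar> \<le> \<epsilon>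
         \<longrightarrow> norm (f (complex_of_real \<rho> * cis \<phi>)) \<le> C * \<rho> powr (- N)))"

definition rapid_section :: "complex set \<Rightarrow> (complex \<Rightarrow> complex) \<Rightarrow> bool" where
  "rapid_section U f \<longleftrightarrow> holo_section U f \<and>
     (\<forall>\<theta>. cis \<theta> \<in> U \<longrightarrow> (\<exists>\<epsilon>>0. \<exists>r>0. \<forall>N::nat. \<exists>C. \<forall>\<rho> \<phi>. 0 < \<rho> \<and> \<rho> < r \<and> \<bar>\<phi> - \<theta>\<bar> \<le> \<epsilon>
         \<longrightarrow> norm (f (complex_of_real \<rho> * cis \<phi>)) \<le> C * \<rho> ^ N))"

definition punctured_germ_description :: "complex set \<Rightarrow> (complex \<Rightarrow> complex) \<Rightarrow> bool" where
  "punctured_germ_description U w \<longleftrightarrow>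
     (\<forall>\<rho> g. \<rho> > 0 \<and> g holomorphic_on (ball 0 \<rho> - {0}) \<longrightarrow> per_section U (\<lambda>t. g (w t)))
   \<and> (\<forall>\<rho>1 \<rho>2 g1 g2. \<rho>1 > 0 \<and> \<rho>2 > 0 \<and> g1 holomorphic_on (ball 0 \<rho>1 - {0})
        \<and> g2 holomorphic_on (ball 0 \<rho>2 - {0}) \<and> germ_eq U (\<lambda>t. g1 (w t)) (\<lambda>t. g2 (w t))
        \<longrightarrow> (\<exists>\<rho>>0. \<forall>z \<in> ball 0 \<rho> - {0}. g1 z = g2 z))
   \<and> (\<forall>f. per_section U f \<longrightarrow>
        (\<exists>\<rho>>0. \<exists>g. g holomorphic_on (ball 0 \<rho> - {0}) \<and> germ_eq U f (\<lambda>t. g (w t))))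
   \<and> (\<forall>f. (per_section U f \<and> moderate_section U f) \<longleftrightarrow>
        (\<exists>\<rho>>0. \<exists>h. h holomorphic_on ball 0 \<rho> \<and> germ_eq U f (\<lambda>t. h (w t))))
   \<and> (\<forall>f. (per_section U f \<and> rapid_section U f) \<longleftrightarrow>
        (\<exists>\<rho>>0. \<exists>h. h holomorphic_on ball 0 \<rho> \<and> h 0 = 0 \<and> germ_eq U f (\<lambda>t. h (w t))))"

definition entire_u_description :: "complex set \<Rightarrow> bool" where
  "entire_u_description U \<longleftrightarrow>
     (\<forall>g. g holomorphic_on (UNIV - {0}) \<longrightarrow> per_section U (\<lambda>t. g (ucoord t)))
   \<and> (\<forall>g1 g2. g1 holomorphic_on (UNIV - {0}) \<and> g2 holomorphic_on (UNIV - {0})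
        \<and> germ_eq U (\<lambda>t. g1 (ucoord t)) (\<lambda>t. g2 (ucoord t))
        \<longrightarrow> (\<forall>z. z \<noteq> 0 \<longrightarrow> g1 z = g2 z))
   \<and> (\<forall>f. per_section U f \<longrightarrow>
        (\<exists>g. g holomorphic_on (UNIV - {0}) \<and> germ_eq U f (\<lambda>t. g (ucoord t))))
   \<and> (\<forall>f. (per_section U f \<and> moderate_section U f) \<longleftrightarrow> (\<exists>c. germ_eq U f (\<lambda>t. c)))
   \<and> (\<forall>f. (per_section U f \<and> rapid_section U f) \<longleftrightarrow> germ_eq U f (\<lambda>t. 0))"

end

theory Submission
  imports Defs "HOL-Real_Asymp.Real_Asymp"
begin

text \<open>Under \<open>s = 1/t\<close> the map \<open>t \<mapsto> t/(1+t)\<close> becomes the translation \<open>s \<mapsto> s + 1\<close>, and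
  sectors at a direction \<open>c\<close> correspond, up to shrinking, to truncated cones around the ray
  through \<open>cnj c\<close>. A translation-invariant holomorphic function on such a convex cone is a
  holomorphic function of \<open>q = exp (2 \<pi> i \<sigma> s)\<close>, and by the identity theorem these local
  descriptions glue along the connected arc \<open>U\<close>. If \<open>U\<close> lies in an open half-plane, \<open>q\<close> (that is,
  \<open>u\<close> or \<open>v\<close>) decays like \<open>exp (- const / \<bar>t\<bar>)\<close> along \<open>U\<close> and the cones map onto punctured
  discs; moderate growth of \<open>f\<close> then means logarithmic growth in \<open>q\<close>, hence a removable
  singularity at \<open>q = 0\<close>, and rapid decay means a zero there. If \<open>U\<close> contains a real direction, the
  cones map onto \<open>C*\<close>, and nearby directions on both sides of the real axis make \<open>0\<close> and \<open>\<infinity>\<close>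
  removable, so by Liouville's theorem only constants remain.\<close>

lemma norm_sgn_diff_le:
  fixes x y :: "'a::real_normed_vector"
  assumes "y \<noteq> 0"
  shows "norm (sgn x - sgn y) \<le> 2 * norm (x - y) / norm y"
proof (cases "x = 0")
  case True
  then show ?thesis using assms by (simp add: norm_sgn)
next
  case False
  have ny: "norm y > 0" and nx: "norm x > 0" using assms False by auto
  have "sgn x - sgn y = (x - y) /\<^sub>R norm y + (1 / norm x - 1 / norm y) *\<^sub>R x"
    by (simp add: sgn_div_norm divide_inverse_commute algebra_simps)
  then have "norm (sgn x - sgn y) \<le> norm (x - y) / norm y + \<bar>1 / norm x - 1 / norm y\<bar> * norm x"
    by (metis norm_scaleR norm_triangle_ineq divide_inverse_commute
        inverse_nonnegative_iff_nonnegative norm_ge_zero abs_of_nonneg)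
  also have "\<bar>1 / norm x - 1 / norm y\<bar> * norm x = \<bar>norm y - norm x\<bar> / norm y"
    using nx ny by (simp add: field_simps abs_div abs_mult)
  also have "\<dots> \<le> norm (x - y) / norm y"
    using ny by (intro divide_right_mono) (auto simp: norm_triangle_ineq3 abs_minus_commute)
  finally show ?thesis by simp
qed

lemma norm_cis_diff_le: "norm (cis a - cis b) \<le> \<bar>a - b\<bar>"
proof -
  have "(norm (cis a - cis b))\<^sup>2 = (cos a - cos b)\<^sup>2 + (sin a - sin b)\<^sup>2"
    by (simp add: cmod_def)
  also have "\<dots> = 2 - 2 * cos (a - b)"
    by (simp add: power2_eq_square cos_diff algebra_simps)
  also have "\<dots> = 4 * (sin ((a - b) / 2))\<^sup>2"
    using cos_double_sin[of "(a - b) / 2"] by (simp add: diff_divide_distrib)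
  also have "\<dots> \<le> 4 * ((a - b) / 2)\<^sup>2"
    using abs_sin_x_le_abs_x[of "(a - b) / 2"]
    by (intro mult_left_mono) (auto simp: abs_le_square_iff simp del: abs_divide)
  also have "\<dots> = \<bar>a - b\<bar>\<^sup>2"
    by (simp add: power2_eq_square)
  finally show ?thesis
    by (rule power2_le_imp_le) simp
qed

lemma exp_neg_le_power:
  assumes "x > 0"
  shows "exp (- x) \<le> (real N / x) ^ N"
proof (cases "N = 0")
  case False
  have "(x / real N) ^ N \<le> (1 + x / real N) ^ N"
    using assms by (intro power_mono) auto
  also have "\<dots> \<le> exp x"
    using assms False by (intro exp_ge_one_plus_x_over_n_power_n) auto
  finally have "inverse (exp x) \<le> inverse ((x / real N) ^ N)"
    using assms False by (intro le_imp_inverse_le) auto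
  then show ?thesis
    by (simp add: exp_minus power_inverse[symmetric])
qed (use assms in simp)

lemma tendsto_log_power_mult_at_right:
  "b > 0 \<Longrightarrow> N \<ge> 0 \<Longrightarrow> ((\<lambda>x::real. x * (ln (1 / x) * b + 1/2) powr N) \<longlongrightarrow> 0) (at_right 0)"
  by real_asymp

lemma nearby_dirs_on_both_sides:
  assumes c0: "c0 \<in> {1, -1}" and e: "e > 0"
  shows "\<exists>c1 c2. norm c1 = 1 \<and> norm c2 = 1 \<and> norm (c1 - c0) < e \<and> norm (c2 - c0) < e
    \<and> Im c1 < 0 \<and> 0 < Im c2"
proof -
  define \<alpha> where "\<alpha> = min (e/2) 1"
  have \<alpha>: "0 < \<alpha>" "\<alpha> < e"
    using e by (auto simp: \<alpha>_def)
  have "sin \<alpha> > 0"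
    using \<alpha> pi_gt3 by (intro sin_gt_zero) (auto simp: \<alpha>_def)
  have close: "norm (cis \<alpha> - 1) < e" "norm (cis (- \<alpha>) - 1) < e"
    using norm_cis_diff_le[of \<alpha> 0] norm_cis_diff_le[of "- \<alpha>" 0] \<alpha> by auto
  show ?thesis
  proof (cases "c0 = 1")
    case True
    then show ?thesis
      using close \<open>sin \<alpha> > 0\<close> by (intro exI[of _ "cis (- \<alpha>)"] exI[of _ "cis \<alpha>"]) simp
  next
    case False
    then have "c0 = -1"
      using c0 by simp
    moreover have "- cis \<alpha> - - 1 = - (cis \<alpha> - 1)" "- cis (- \<alpha>) - - 1 = - (cis (- \<alpha>) - 1)"
      by simp_all
    then have "norm (- cis \<alpha> - - 1) < e" "norm (- cis (- \<alpha>) - - 1) < e"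
      using close by (simp_all only: norm_minus_cancel)
    ultimately show ?thesis
      using \<open>sin \<alpha> > 0\<close> by (intro exI[of _ "- cis \<alpha>"] exI[of _ "- cis (- \<alpha>)"]) simp
  qed
qed

lemma Im_pos_if_in_upper_arc: "c \<in> arc_dir 0 pi \<Longrightarrow> Im c > 0"
  by (auto simp: arc_dir_def intro: sin_gt_zero)

lemma Im_neg_if_in_lower_arc: "c \<in> arc_dir (- pi) 0 \<Longrightarrow> Im c < 0"
  using sin_gt_zero[of "- _"] by (auto simp: arc_dir_def)

lemma bounded_image_cball_if_holomorphic:
  assumes "f holomorphic_on S" "cball a r \<subseteq> S"
  shows "bounded (f ` cball a r)"
  using holomorphic_on_imp_continuous_on[OF holomorphic_on_subset[OF assms]]
  by (intro compact_imp_bounded compact_continuous_image compact_cball)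

lemma eventually_linear_bound_at_zero:
  fixes h :: "complex \<Rightarrow> complex"
  assumes "h field_differentiable (at 0)" "h 0 = 0"
  shows "\<exists>M. eventually (\<lambda>z. norm (h z) \<le> M * norm z) (at 0)"
proof -
  obtain D where "((\<lambda>z. (h z - h 0) / (z - 0)) \<longlongrightarrow> D) (at 0)"
    using assms(1) unfolding field_differentiable_def has_field_derivative_iff by blast
  then have "((\<lambda>z. norm (h z / z)) \<longlongrightarrow> norm D) (at 0)"
    using assms(2) by (simp add: tendsto_norm)
  then have "eventually (\<lambda>z. norm (h z / z) < norm D + 1) (at 0)"
    by (rule order_tendstoD) simp
  then have "eventually (\<lambda>z. norm (h z) \<le> (norm D + 1) * norm z) (at 0)"
    by (rule eventually_mono) (use assms(2) in \<open>auto simp: norm_divide divide_less_eq split: if_split_asm\<close>)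
  then show ?thesis
    by blast
qed

lemma entire_extension_if_removable_at_zero:
  assumes g: "g holomorphic_on UNIV - {0}"
    and h: "h holomorphic_on ball 0 1" "\<forall>z\<in>ball 0 1 - {0}. h z = g z"
  shows "(\<lambda>z. if z = 0 then h 0 else g z) holomorphic_on UNIV"
proof -
  define G where "G z = (if z = 0 then h 0 else g z)" for z
  have "G holomorphic_on ball 0 1"
    by (rule holomorphic_transform[OF h(1)]) (use h(2) in \<open>auto simp: G_def\<close>)
  moreover have "G holomorphic_on UNIV - {0}"
    by (rule holomorphic_transform[OF g]) (auto simp: G_def)
  ultimately have "G holomorphic_on ball 0 1 \<union> (UNIV - {0})"
    by (intro holomorphic_on_Un) auto
  moreover have "ball 0 1 \<union> (UNIV - {0}) = (UNIV :: complex set)"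
    by auto
  ultimately have "G holomorphic_on UNIV"
    by simp
  then show ?thesis
    by (simp add: G_def[abs_def])
qed

lemma constant_if_removable_at_zero_and_infinity:
  assumes g: "g holomorphic_on UNIV - {0}"
    and h1: "h1 holomorphic_on ball 0 1" "\<forall>z\<in>ball 0 1 - {0}. h1 z = g z"
    and h2: "h2 holomorphic_on ball 0 1" "\<forall>z\<in>ball 0 1 - {0}. h2 z = g (inverse z)"
  shows "\<exists>k. \<forall>z. z \<noteq> 0 \<longrightarrow> g z = k"
proof -
  define G where "G z = (if z = 0 then h1 0 else g z)" for z
  have GH: "G holomorphic_on UNIV"
    unfolding G_def by (rule entire_extension_if_removable_at_zero[OF g h1])
  have "range G \<subseteq> G ` cball 0 2 \<union> h2 ` cball 0 (1/2)"
  proof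
    fix w assume "w \<in> range G"
    then obtain z where z: "w = G z"
      by blast
    show "w \<in> G ` cball 0 2 \<union> h2 ` cball 0 (1/2)"
    proof (cases "norm z \<le> 2")
      case False
      then have "norm (inverse z) \<le> 1/2" "z \<noteq> 0"
        using le_imp_inverse_le[of 2 "norm z"] by (auto simp: norm_inverse)
      moreover have "G z = h2 (inverse z)"
        using h2(2) calculation by (simp add: G_def)
      ultimately show ?thesis
        using z by auto
    qed (use z in auto)
  qed
  moreover have "bounded (G ` cball 0 2 \<union> h2 ` cball 0 (1/2))"
  proof -
    have "cball 0 (1/2) \<subseteq> ball (0::complex) 1"
      by auto
    then show ?thesis
      using bounded_image_cball_if_holomorphic[OF GH] bounded_image_cball_if_holomorphic[OF h2(1)]
      by (simp add: bounded_Un)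
  qed
  ultimately have "bounded (range G)"
    by (rule bounded_subset[rotated])
  then have "G constant_on UNIV"
    by (rule Liouville_theorem[OF GH])
  then obtain k where k: "\<And>z. G z = k"
    unfolding constant_on_def by blast
  have "g z = k" if "z \<noteq> 0" for z
    using k[of z] that by (simp add: G_def)
  then show ?thesis
    by blast
qed

section \<open>Sectors and germs along an arc\<close>

definition sector :: "complex \<Rightarrow> real \<Rightarrow> real \<Rightarrow> complex set" where
  "sector c r \<eta> = {t. t \<noteq> 0 \<and> norm t < r \<and> norm (sgn t - c) < \<eta>}"

lemma open_sector: "open (sector c r \<eta>)"
proof -
  have "sector c r \<eta> = (- {0}) \<inter> (\<lambda>t. (norm t, norm (sgn t - c))) -` ({..<r} \<times> {..<\<eta>})"
    by (auto simp: sector_def)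
  also have "open \<dots>"
    by (intro continuous_open_preimage continuous_intros open_Times) auto
  finally show ?thesis .
qed

lemma sector_shift:
  assumes "norm (c' - c) + \<eta>' \<le> \<eta>"
  shows "sector c' r \<eta>' \<subseteq> sector c r \<eta>"
proof
  fix t assume t: "t \<in> sector c' r \<eta>'"
  have "norm (sgn t - c) \<le> norm (sgn t - c') + norm (c' - c)"
    using norm_triangle_ineq[of "sgn t - c'" "c' - c"] by simp
  with t assms show "t \<in> sector c r \<eta>"
    by (auto simp: sector_def)
qed

lemma scaled_unit_in_sector:
  assumes "0 < \<rho>" "\<rho> < r" "norm c = 1" "norm (c - c') < \<eta>"
  shows "complex_of_real \<rho> * c \<in> sector c' r \<eta>"
proof -
  have "sgn c = c"
    using assms by (simp add: sgn_div_norm)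
  then have "sgn (complex_of_real \<rho> * c) = c"
    using assms by (simp add: sgn_mult sgn_of_real)
  then show ?thesis
    using assms by (auto simp: sector_def norm_mult)
qed

lemma sectors_at_nearby_dirs_meet:
  assumes "norm c = 1" "norm (c - c1) < \<eta>1" "r1 > 0" "r > 0" "\<eta> > 0"
  shows "\<exists>t. t \<in> sector c1 r1 \<eta>1 \<and> t \<in> sector c r \<eta>"
proof -
  define t where "t = complex_of_real (min r1 r / 2) * c"
  have "t \<in> sector c1 r1 \<eta>1" "t \<in> sector c r \<eta>"
    unfolding t_def by (rule scaled_unit_in_sector; use assms in simp)+
  then show ?thesis
    by blast
qed

text \<open>\<open>at_dir c\<close> is the trace on \<open>C*\<close> of the neighbourhood filter of the point \<open>(0, c)\<close> of
  the real oriented blow-up, and \<open>at_arc U\<close> that of \<open>U\<close>: a statement holding eventually in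
  \<open>at_arc U\<close> is a statement about germs along \<open>U\<close> (cf. \<open>germ_eq_iff\<close>).\<close>
definition at_dir :: "complex \<Rightarrow> complex filter" where
  "at_dir c = (INF (r, \<eta>)\<in>{0<..} \<times> {0<..}. principal (sector c r \<eta>))"

definition at_arc :: "complex set \<Rightarrow> complex filter" where
  "at_arc U = (SUP c\<in>U. at_dir c)"

lemma eventually_at_dir:
  "eventually P (at_dir c) \<longleftrightarrow> (\<exists>r>0. \<exists>\<eta>>0. \<forall>t\<in>sector c r \<eta>. P t)"
proof -
  have "eventually P (at_dir c) \<longleftrightarrow>
      (\<exists>x\<in>{0<..} \<times> {0<..}. eventually P (principal (sector c (fst x) (snd x))))"
    unfolding at_dir_def case_prod_beta
  proof (rule eventually_INF_base)
    fix a b :: "real \<times> real"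
    assume "a \<in> {0<..} \<times> {0<..}" "b \<in> {0<..} \<times> {0<..}"
    then show "\<exists>x\<in>{0<..} \<times> {0<..}. principal (sector c (fst x) (snd x))
        \<le> inf (principal (sector c (fst a) (snd a))) (principal (sector c (fst b) (snd b)))"
      by (intro bexI[of _ "(min (fst a) (fst b), min (snd a) (snd b))"]) (auto simp: sector_def)
  qed auto
  then show ?thesis
    by (auto simp: eventually_principal)
qed

lemma eventually_at_dirI:
  "r > 0 \<Longrightarrow> \<eta> > 0 \<Longrightarrow> (\<And>t. t \<in> sector c r \<eta> \<Longrightarrow> P t) \<Longrightarrow> eventually P (at_dir c)"
  unfolding eventually_at_dir by blast

lemma eventually_at_arc: "eventually P (at_arc U) \<longleftrightarrow> (\<forall>c\<in>U. eventually P (at_dir c))"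
  by (simp add: at_arc_def eventually_Sup)

lemma eventually_at_arc_imp_at_dir: "eventually P (at_arc U) \<Longrightarrow> c \<in> U \<Longrightarrow> eventually P (at_dir c)"
  by (simp add: eventually_at_arc)

lemma eventually_in_sector: "r > 0 \<Longrightarrow> \<eta> > 0 \<Longrightarrow> eventually (\<lambda>t. t \<in> sector c r \<eta>) (at_dir c)"
  by (rule eventually_at_dirI)

lemma eventually_at_dir_small: "r > 0 \<Longrightarrow> eventually (\<lambda>t. t \<noteq> 0 \<and> norm t < r) (at_dir c)"
  by (rule eventually_mono[OF eventually_in_sector[of r 1]]) (auto simp: sector_def)

lemma at_dir_neq_bot:
  assumes "norm c = 1"
  shows "at_dir c \<noteq> bot"
proof -
  have "complex_of_real (r / 2) * c \<in> sector c r \<eta>" if "r > 0" "\<eta> > 0" for r \<eta>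
    using that assms by (intro scaled_unit_in_sector) auto
  then show ?thesis
    unfolding trivial_limit_def eventually_at_dir by blast
qed

lemma tendsto_at_dir_zero: "((\<lambda>t. t) \<longlongrightarrow> 0) (at_dir c)"
  unfolding tendsto_iff
  by (auto intro!: eventually_at_dirI[of _ 1] simp: sector_def)

lemma filterlim_norm_at_dir: "filterlim norm (at_right 0) (at_dir c)"
  unfolding filterlim_at
  using eventually_at_dir_small[of 1 c] tendsto_norm_zero[OF tendsto_at_dir_zero]
  by (auto elim: eventually_mono)

lemma eventually_at_dir_nearby:
  assumes "eventually P (at_dir c)"
  shows "\<exists>e>0. \<forall>c'. norm (c' - c) < e \<longrightarrow> eventually P (at_dir c')"
proof -
  obtain r \<eta> where "r > 0" "\<eta> > 0" and P: "\<And>t. t \<in> sector c r \<eta> \<Longrightarrow> P t"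
    using assms unfolding eventually_at_dir by blast
  have "eventually P (at_dir c')" if "norm (c' - c) < \<eta> / 2" for c'
    using that P sector_shift[of c' c "\<eta> / 2" \<eta> r] \<open>r > 0\<close> \<open>\<eta> > 0\<close>
    by (intro eventually_at_dirI[of r "\<eta> / 2"]) auto
  then show ?thesis
    using \<open>\<eta> > 0\<close> by (intro exI[of _ "\<eta> / 2"]) auto
qed

lemma eventually_at_arc_nhds:
  assumes "eventually P (at_arc U)"
  shows "eventually (\<lambda>t. eventually P (nhds t)) (at_arc U)"
  unfolding eventually_at_arc
proof
  fix c assume "c \<in> U"
  then obtain r \<eta> where "r > 0" "\<eta> > 0" and P: "\<And>t. t \<in> sector c r \<eta> \<Longrightarrow> P t"
    using assms unfolding eventually_at_arc eventually_at_dir by blast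
  show "eventually (\<lambda>t. eventually P (nhds t)) (at_dir c)"
  proof (rule eventually_at_dirI[OF \<open>r > 0\<close> \<open>\<eta> > 0\<close>])
    show "eventually P (nhds t)" if "t \<in> sector c r \<eta>" for t
      unfolding eventually_nhds by (intro exI[of _ "sector c r \<eta>"]) (use that P open_sector in auto)
  qed
qed

lemma moebius_near_zero:
  fixes t :: complex
  assumes "t \<noteq> 0" "norm t < 1/2"
  shows "t / (1 + t) \<noteq> 0" "norm (t / (1 + t)) \<le> 2 * norm t"
    "norm (sgn (t / (1 + t)) - sgn t) \<le> 4 * norm t"
proof -
  have n1: "norm (1 + t) \<ge> 1/2"
    using norm_triangle_ineq4[of "1 + t" t] assms by simp
  then have t1: "1 + t \<noteq> 0"
    by auto
  then show "t / (1 + t) \<noteq> 0"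
    using assms by simp
  have "norm t / norm (1 + t) \<le> norm t / (1/2)"
    using n1 by (intro divide_left_mono) auto
  then show nq: "norm (t / (1 + t)) \<le> 2 * norm t"
    by (simp add: norm_divide)
  have "t / (1 + t) - t = - (t * t) / (1 + t)"
    using t1 by (simp add: field_simps)
  then have "norm (t / (1 + t) - t) / norm t = norm (t / (1 + t))"
    using assms by (simp add: norm_divide norm_mult)
  then show "norm (sgn (t / (1 + t)) - sgn t) \<le> 4 * norm t"
    using norm_sgn_diff_le[OF assms(1), of "t / (1 + t)"] nq by simp
qed

lemma eventually_at_dir_moebius:
  assumes "eventually P (at_dir c)"
  shows "eventually (\<lambda>t. P (t / (1 + t))) (at_dir c)"
proof -
  obtain r \<eta> where "r > 0" "\<eta> > 0" and P: "\<And>t. t \<in> sector c r \<eta> \<Longrightarrow> P t"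
    using assms unfolding eventually_at_dir by blast
  define r' where "r' = min (1/2) (min (r/2) (\<eta>/8))"
  have "t / (1 + t) \<in> sector c r \<eta>" if t: "t \<in> sector c r' (\<eta>/2)" for t
  proof -
    have t0: "t \<noteq> 0" and tr: "norm t < r'" and ts: "norm (sgn t - c) < \<eta>/2"
      using t by (auto simp: sector_def)
    note q = moebius_near_zero[OF t0, unfolded r'_def]
    have "norm (sgn (t / (1 + t)) - c) \<le> norm (sgn (t / (1 + t)) - sgn t) + norm (sgn t - c)"
      using norm_triangle_ineq[of "sgn (t / (1 + t)) - sgn t" "sgn t - c"] by simp
    then show ?thesis
      using q tr ts by (auto simp: sector_def r'_def)
  qed
  moreover have "r' > 0"
    using \<open>r > 0\<close> \<open>\<eta> > 0\<close> by (simp add: r'_def)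
  ultimately show ?thesis
    using P \<open>\<eta> > 0\<close> by (intro eventually_at_dirI[of r' "\<eta>/2"]) auto
qed

lemma eventually_at_arc_moebius:
  "eventually P (at_arc U) \<Longrightarrow> eventually (\<lambda>t. P (t / (1 + t))) (at_arc U)"
  by (simp add: eventually_at_arc eventually_at_dir_moebius)

definition polar_sector :: "real \<Rightarrow> real \<Rightarrow> real \<Rightarrow> complex set" where
  "polar_sector \<theta> r \<epsilon> = {complex_of_real \<rho> * cis \<phi> | \<rho> \<phi>. 0 < \<rho> \<and> \<rho> < r \<and> \<bar>\<phi> - \<theta>\<bar> \<le> \<epsilon>}"

lemma ball_polar_sector:
  "(\<forall>t\<in>polar_sector \<theta> r \<epsilon>. P (norm t) t) \<longleftrightarrow>
    (\<forall>\<rho> \<phi>. 0 < \<rho> \<and> \<rho> < r \<and> \<bar>\<phi> - \<theta>\<bar> \<le> \<epsilon> \<longrightarrow> P \<rho> (complex_of_real \<rho> * cis \<phi>))"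
    (is "?polar \<longleftrightarrow> ?coords")
proof
  assume ?polar
  show ?coords
  proof (intro allI impI)
    fix \<rho> \<phi> assume h: "0 < \<rho> \<and> \<rho> < r \<and> \<bar>\<phi> - \<theta>\<bar> \<le> \<epsilon>"
    then have "complex_of_real \<rho> * cis \<phi> \<in> polar_sector \<theta> r \<epsilon>"
      by (auto simp: polar_sector_def)
    moreover have "norm (complex_of_real \<rho> * cis \<phi>) = \<rho>"
      using h by (simp add: norm_mult)
    ultimately show "P \<rho> (complex_of_real \<rho> * cis \<phi>)"
      using \<open>?polar\<close> by metis
  qed
qed (auto simp: polar_sector_def norm_mult)

lemma polar_sector_subset_sector:
  assumes "\<epsilon> < \<eta>"
  shows "polar_sector \<theta> r \<epsilon> \<subseteq> sector (cis \<theta>) r \<eta>"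
proof
  fix t assume "t \<in> polar_sector \<theta> r \<epsilon>"
  then obtain \<rho> \<phi> where "t = complex_of_real \<rho> * cis \<phi>" "0 < \<rho>" "\<rho> < r" "\<bar>\<phi> - \<theta>\<bar> \<le> \<epsilon>"
    by (auto simp: polar_sector_def)
  then show "t \<in> sector (cis \<theta>) r \<eta>"
    using norm_cis_diff_le[of \<phi> \<theta>] assms by (auto intro!: scaled_unit_in_sector)
qed

lemma sector_subset_polar_sector:
  assumes "\<epsilon> > 0"
  obtains \<eta> where "\<eta> > 0" "sector (cis \<theta>) r \<eta> \<subseteq> polar_sector \<theta> r \<epsilon>"
proof -
  have "continuous (at 1) Arg"
    by (rule continuous_at_Arg) (auto simp: complex_nonpos_Reals_iff)
  then obtain \<eta> where "\<eta> > 0" and \<eta>: "\<And>e. dist e 1 < \<eta> \<Longrightarrow> dist (Arg e) (Arg 1) < \<epsilon>"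
    using assms unfolding continuous_at_eps_delta by blast
  have "t \<in> polar_sector \<theta> r \<epsilon>" if t: "t \<in> sector (cis \<theta>) r \<eta>" for t
  proof -
    define e where "e = sgn t / cis \<theta>"
    have t0: "t \<noteq> 0"
      using t by (simp add: sector_def)
    have "e - 1 = (sgn t - cis \<theta>) / cis \<theta>"
      by (simp add: e_def field_simps)
    then have "\<bar>Arg e\<bar> < \<epsilon>"
      using \<eta>[of e] t by (simp add: dist_norm norm_divide sector_def)
    moreover have "complex_of_real (norm t) * cis (\<theta> + Arg e) = t"
      using t0 by (simp add: cis_mult[symmetric] cis_Arg e_def sgn_div_norm norm_divide norm_sgn
          norm_mult scaleR_conv_of_real field_simps)
    ultimately show ?thesis
      using t unfolding polar_sector_def mem_Collect_eq
      by (intro exI[of _ "norm t"] exI[of _ "\<theta> + Arg e"]) (auto simp: sector_def)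
  qed
  with \<open>\<eta> > 0\<close> that show ?thesis
    by blast
qed

lemma polar_condition_iff_sector_condition:
  assumes U: "U \<subseteq> sphere 0 1" and B: "\<And>S T. S \<subseteq> T \<Longrightarrow> B T \<Longrightarrow> B S"
  shows "(\<forall>\<theta>. cis \<theta> \<in> U \<longrightarrow> (\<exists>\<epsilon>>0. \<exists>r>0. B (polar_sector \<theta> r \<epsilon>)))
     \<longleftrightarrow> (\<forall>c\<in>U. \<exists>r>0. \<exists>\<eta>>0. B (sector c r \<eta>))"
proof safe
  fix c assume polar: "\<forall>\<theta>. cis \<theta> \<in> U \<longrightarrow> (\<exists>\<epsilon>>0. \<exists>r>0. B (polar_sector \<theta> r \<epsilon>))" and "c \<in> U"
  then have "norm c = 1"
    using U by auto
  then have "c \<noteq> 0"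
    by auto
  with \<open>norm c = 1\<close> have "cis (Arg c) = c"
    by (simp add: cis_Arg sgn_div_norm)
  then obtain \<epsilon> r where "\<epsilon> > 0" "r > 0" "B (polar_sector (Arg c) r \<epsilon>)"
    using polar \<open>c \<in> U\<close> by metis
  moreover obtain \<eta> where "\<eta> > 0" "sector c r \<eta> \<subseteq> polar_sector (Arg c) r \<epsilon>"
    using sector_subset_polar_sector[OF \<open>\<epsilon> > 0\<close>, of "Arg c" r] \<open>cis (Arg c) = c\<close> by metis
  ultimately show "\<exists>r>0. \<exists>\<eta>>0. B (sector c r \<eta>)"
    using B by blast
next
  fix \<theta> assume "\<forall>c\<in>U. \<exists>r>0. \<exists>\<eta>>0. B (sector c r \<eta>)" "cis \<theta> \<in> U"
  then obtain r \<eta> where "r > 0" "\<eta> > 0" "B (sector (cis \<theta>) r \<eta>)"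
    by blast
  then show "\<exists>\<epsilon>>0. \<exists>r>0. B (polar_sector \<theta> r \<epsilon>)"
    using B[OF polar_sector_subset_sector[of "\<eta> / 2" \<eta> \<theta> r]] by (intro exI[of _ "\<eta> / 2"]) auto
qed

lemma sector_nbhd_iff:
  assumes "U \<subseteq> sphere 0 1"
  shows "sector_nbhd U \<Omega> \<longleftrightarrow> open \<Omega> \<and> 0 \<notin> \<Omega> \<and> eventually (\<lambda>t. t \<in> \<Omega>) (at_arc U)"
proof -
  have strict: "(\<exists>r>0. \<exists>\<epsilon>>0. \<forall>\<rho> \<phi>. 0 < \<rho> \<and> \<rho> < r \<and> \<bar>\<phi> - \<theta>\<bar> < \<epsilon> \<longrightarrow> complex_of_real \<rho> * cis \<phi> \<in> \<Omega>)
      \<longleftrightarrow> (\<exists>\<epsilon>>0. \<exists>r>0. polar_sector \<theta> r \<epsilon> \<subseteq> \<Omega>)" for \<theta>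
  proof
    assume "\<exists>r>0. \<exists>\<epsilon>>0. \<forall>\<rho> \<phi>. 0 < \<rho> \<and> \<rho> < r \<and> \<bar>\<phi> - \<theta>\<bar> < \<epsilon> \<longrightarrow> complex_of_real \<rho> * cis \<phi> \<in> \<Omega>"
    then obtain r \<epsilon> where "r > 0" "\<epsilon> > 0"
      and "\<forall>\<rho> \<phi>. 0 < \<rho> \<and> \<rho> < r \<and> \<bar>\<phi> - \<theta>\<bar> < \<epsilon> \<longrightarrow> complex_of_real \<rho> * cis \<phi> \<in> \<Omega>"
      by blast
    then have "\<epsilon> / 2 > 0" "polar_sector \<theta> r (\<epsilon> / 2) \<subseteq> \<Omega>"
      by (auto simp: polar_sector_def)
    then show "\<exists>\<epsilon>>0. \<exists>r>0. polar_sector \<theta> r \<epsilon> \<subseteq> \<Omega>"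
      using \<open>r > 0\<close> by blast
  next
    assume "\<exists>\<epsilon>>0. \<exists>r>0. polar_sector \<theta> r \<epsilon> \<subseteq> \<Omega>"
    then obtain \<epsilon> r where "\<epsilon> > 0" "r > 0" "polar_sector \<theta> r \<epsilon> \<subseteq> \<Omega>"
      by blast
    moreover have "complex_of_real \<rho> * cis \<phi> \<in> polar_sector \<theta> r \<epsilon>"
      if "0 < \<rho> \<and> \<rho> < r \<and> \<bar>\<phi> - \<theta>\<bar> < \<epsilon>" for \<rho> \<phi>
      unfolding polar_sector_def using that by force
    ultimately show "\<exists>r>0. \<exists>\<epsilon>>0. \<forall>\<rho> \<phi>. 0 < \<rho> \<and> \<rho> < r \<and> \<bar>\<phi> - \<theta>\<bar> < \<epsilon> \<longrightarrow> complex_of_real \<rho> * cis \<phi> \<in> \<Omega>"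
      by blast
  qed
  have "(\<forall>c\<in>U. \<exists>r>0. \<exists>\<eta>>0. sector c r \<eta> \<subseteq> \<Omega>) \<longleftrightarrow> eventually (\<lambda>t. t \<in> \<Omega>) (at_arc U)"
    by (simp add: eventually_at_arc eventually_at_dir subset_eq)
  then show ?thesis
    unfolding sector_nbhd_def strict
    using polar_condition_iff_sector_condition[OF assms, of "\<lambda>S. S \<subseteq> \<Omega>"] by blast
qed

lemma eventually_at_arc_iff_sector_nbhd:
  assumes U: "U \<subseteq> sphere 0 1"
  shows "eventually P (at_arc U) \<longleftrightarrow> (\<exists>\<Omega>. sector_nbhd U \<Omega> \<and> (\<forall>t\<in>\<Omega>. P t))"
proof
  assume P: "eventually P (at_arc U)"
  define \<Omega> where "\<Omega> = \<Union>{sector c r \<eta> | c r \<eta>. c \<in> U \<and> r > 0 \<and> \<eta> > 0 \<and> (\<forall>t\<in>sector c r \<eta>. P t)}"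
  have "open \<Omega>"
    unfolding \<Omega>_def by (auto intro!: open_Union open_sector)
  moreover have "0 \<notin> \<Omega>" "\<forall>t\<in>\<Omega>. P t"
    unfolding \<Omega>_def by (auto simp: sector_def)
  moreover have "eventually (\<lambda>t. t \<in> \<Omega>) (at_arc U)"
    unfolding eventually_at_arc
  proof
    fix c assume "c \<in> U"
    then obtain r \<eta> where "r > 0" "\<eta> > 0" "\<forall>t\<in>sector c r \<eta>. P t"
      using P unfolding eventually_at_arc eventually_at_dir by blast
    then have "sector c r \<eta> \<subseteq> \<Omega>"
      using \<open>c \<in> U\<close> unfolding \<Omega>_def by blast
    then show "eventually (\<lambda>t. t \<in> \<Omega>) (at_dir c)"
      by (intro eventually_at_dirI[OF \<open>r > 0\<close> \<open>\<eta> > 0\<close>]) auto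
  qed
  ultimately show "\<exists>\<Omega>. sector_nbhd U \<Omega> \<and> (\<forall>t\<in>\<Omega>. P t)"
    using sector_nbhd_iff[OF U] by blast
next
  assume "\<exists>\<Omega>. sector_nbhd U \<Omega> \<and> (\<forall>t\<in>\<Omega>. P t)"
  then obtain \<Omega> where "eventually (\<lambda>t. t \<in> \<Omega>) (at_arc U)" "\<forall>t\<in>\<Omega>. P t"
    using sector_nbhd_iff[OF U] by blast
  then show "eventually P (at_arc U)"
    by (auto elim: eventually_mono)
qed

lemma germ_eq_iff: "U \<subseteq> sphere 0 1 \<Longrightarrow> germ_eq U f g \<longleftrightarrow> eventually (\<lambda>t. f t = g t) (at_arc U)"
  by (simp add: germ_eq_def eventually_at_arc_iff_sector_nbhd)

lemma holo_section_iff: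
  assumes U: "U \<subseteq> sphere 0 1"
  shows "holo_section U f \<longleftrightarrow> eventually (\<lambda>t. f field_differentiable (at t)) (at_arc U)"
proof
  assume "holo_section U f"
  then obtain \<Omega> where "sector_nbhd U \<Omega>" and hol: "f holomorphic_on \<Omega>"
    unfolding holo_section_def by blast
  then have "open \<Omega>" "eventually (\<lambda>t. t \<in> \<Omega>) (at_arc U)"
    using sector_nbhd_iff[OF U] by blast+
  then show "eventually (\<lambda>t. f field_differentiable (at t)) (at_arc U)"
    by (auto elim: eventually_mono intro: holomorphic_on_imp_differentiable_at[OF hol])
next
  assume "eventually (\<lambda>t. f field_differentiable (at t)) (at_arc U)"
  then show "holo_section U f"
    unfolding holo_section_def eventually_at_arc_iff_sector_nbhd[OF U]
    by (auto simp: holomorphic_on_def field_differentiable_at_within)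
qed

lemma per_section_iff:
  "U \<subseteq> sphere 0 1 \<Longrightarrow>
    per_section U f \<longleftrightarrow> eventually (\<lambda>t. f field_differentiable (at t) \<and> f (t / (1 + t)) = f t) (at_arc U)"
  by (simp add: per_section_def holo_section_iff germ_eq_iff eventually_conj_iff)

lemma per_section_cong:
  assumes U: "U \<subseteq> sphere 0 1" and f: "per_section U f" and fg: "eventually (\<lambda>t. f t = g t) (at_arc U)"
  shows "per_section U g"
proof -
  have "eventually (\<lambda>t. (f field_differentiable (at t) \<and> f (t / (1 + t)) = f t)
      \<and> eventually (\<lambda>x. f x = g x) (nhds t) \<and> f (t / (1 + t)) = g (t / (1 + t))) (at_arc U)"
    using f fg eventually_at_arc_nhds eventually_at_arc_moebius
    by (auto simp: per_section_iff[OF U] eventually_conj_iff)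
  then show ?thesis
    unfolding per_section_iff[OF U]
  proof (rule eventually_mono)
    fix t
    assume t: "(f field_differentiable (at t) \<and> f (t / (1 + t)) = f t)
      \<and> eventually (\<lambda>x. f x = g x) (nhds t) \<and> f (t / (1 + t)) = g (t / (1 + t))"
    then have "g field_differentiable (at t)"
      using DERIV_cong_ev[OF refl _ refl] unfolding field_differentiable_def by blast
    moreover have "g (t / (1 + t)) = g t"
      using t eventually_nhds_x_imp_x by fastforce
    ultimately show "g field_differentiable (at t) \<and> g (t / (1 + t)) = g t"
      by blast
  qed
qed

definition moderate_at :: "complex \<Rightarrow> (complex \<Rightarrow> complex) \<Rightarrow> bool" where
  "moderate_at c f \<longleftrightarrow> (\<exists>C N. eventually (\<lambda>t. norm (f t) \<le> C * norm t powr (- N)) (at_dir c))"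

text \<open>As in \<open>rapid_section\<close>, a single sector has to serve for all exponents \<open>N\<close>.\<close>
definition rapid_at :: "complex \<Rightarrow> (complex \<Rightarrow> complex) \<Rightarrow> bool" where
  "rapid_at c f \<longleftrightarrow> (\<exists>r>0. \<exists>\<eta>>0. \<forall>N::nat. \<exists>C. \<forall>t\<in>sector c r \<eta>. norm (f t) \<le> C * norm t ^ N)"

lemma moderate_section_iff:
  assumes U: "U \<subseteq> sphere 0 1"
  shows "moderate_section U f \<longleftrightarrow> holo_section U f \<and> (\<forall>c\<in>U. moderate_at c f)"
proof -
  define B where "B S \<longleftrightarrow> (\<exists>C N. \<forall>t\<in>S. norm (f t) \<le> C * norm t powr (- N))" for S
  have polar: "(\<exists>C N. \<forall>\<rho> \<phi>. 0 < \<rho> \<and> \<rho> < r \<and> \<bar>\<phi> - \<theta>\<bar> \<le> \<epsilon>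
      \<longrightarrow> norm (f (complex_of_real \<rho> * cis \<phi>)) \<le> C * \<rho> powr (- N)) \<longleftrightarrow> B (polar_sector \<theta> r \<epsilon>)"
    for \<theta> r \<epsilon>
    using ball_polar_sector[where P = "\<lambda>\<rho> t. norm (f t) \<le> _ * \<rho> powr (- _)"] by (simp add: B_def)
  have "(\<exists>r>0. \<exists>\<eta>>0. B (sector c r \<eta>)) \<longleftrightarrow> moderate_at c f" for c
    by (auto simp: B_def moderate_at_def eventually_at_dir)
  moreover have "B S" if "S \<subseteq> T" "B T" for S T
    using that unfolding B_def by blast
  ultimately show ?thesis
    unfolding moderate_section_def polar
    using polar_condition_iff_sector_condition[OF U, of B] by simp
qed

lemma rapid_section_iff:
  assumes U: "U \<subseteq> sphere 0 1"
  shows "rapid_section U f \<longleftrightarrow> holo_section U f \<and> (\<forall>c\<in>U. rapid_at c f)"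
proof -
  define B where "B S \<longleftrightarrow> (\<forall>N::nat. \<exists>C. \<forall>t\<in>S. norm (f t) \<le> C * norm t ^ N)" for S
  have polar: "(\<forall>N::nat. \<exists>C. \<forall>\<rho> \<phi>. 0 < \<rho> \<and> \<rho> < r \<and> \<bar>\<phi> - \<theta>\<bar> \<le> \<epsilon>
      \<longrightarrow> norm (f (complex_of_real \<rho> * cis \<phi>)) \<le> C * \<rho> ^ N) \<longleftrightarrow> B (polar_sector \<theta> r \<epsilon>)"
    for \<theta> r \<epsilon>
    using ball_polar_sector[where P = "\<lambda>\<rho> t. norm (f t) \<le> _ * \<rho> ^ _"] by (simp add: B_def)
  have "B S" if "S \<subseteq> T" "B T" for S T
    using that unfolding B_def by blast
  then show ?thesis
    unfolding rapid_section_def polar rapid_at_def B_def[symmetric]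
    using polar_condition_iff_sector_condition[OF U, of B] by simp
qed

lemma moderate_at_const: "moderate_at c (\<lambda>t. k)"
  unfolding moderate_at_def
proof (intro exI)
  show "eventually (\<lambda>t. norm k \<le> norm k * norm t powr (- 0)) (at_dir c)"
    by (rule eventually_mono[OF eventually_at_dir_small[of 1]]) auto
qed

lemma moderate_at_mono:
  assumes "moderate_at c f" and "eventually (\<lambda>t. norm (g t) \<le> norm (f t)) (at_dir c)"
  shows "moderate_at c g"
proof -
  obtain C N where "eventually (\<lambda>t. norm (f t) \<le> C * norm t powr (- N)) (at_dir c)"
    using assms(1) unfolding moderate_at_def by blast
  with assms(2) have "eventually (\<lambda>t. norm (g t) \<le> C * norm t powr (- N)) (at_dir c)"
    by eventually_elim (rule order_trans)
  then show ?thesis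
    unfolding moderate_at_def by blast
qed

lemma moderate_at_cong:
  assumes "moderate_at c f" and "eventually (\<lambda>t. f t = g t) (at_dir c)"
  shows "moderate_at c g"
proof (rule moderate_at_mono[OF assms(1)])
  show "eventually (\<lambda>t. norm (g t) \<le> norm (f t)) (at_dir c)"
    using assms(2) by (rule eventually_mono) simp
qed

lemma moderate_at_nearby:
  assumes "moderate_at c f"
  shows "\<exists>e>0. \<forall>c'. norm (c' - c) < e \<longrightarrow> moderate_at c' f"
proof -
  obtain C N where "eventually (\<lambda>t. norm (f t) \<le> C * norm t powr (- N)) (at_dir c)"
    using assms unfolding moderate_at_def by blast
  then show ?thesis
    unfolding moderate_at_def using eventually_at_dir_nearby by blast
qed

lemma rapid_at_mono:
  assumes "rapid_at c f" and "eventually (\<lambda>t. norm (g t) \<le> M * norm (f t)) (at_dir c)"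
  shows "rapid_at c g"
proof -
  obtain r \<eta> where r: "r > 0" "\<eta> > 0"
    and bound: "\<And>N::nat. \<exists>C. \<forall>t\<in>sector c r \<eta>. norm (f t) \<le> C * norm t ^ N"
    using assms(1) unfolding rapid_at_def by blast
  obtain r' \<eta>' where "r' > 0" "\<eta>' > 0"
    and dom: "\<And>t. t \<in> sector c r' \<eta>' \<Longrightarrow> norm (g t) \<le> M * norm (f t) \<and> t \<in> sector c r \<eta>"
    using eventually_conj[OF assms(2) eventually_in_sector[OF r]] unfolding eventually_at_dir by blast
  have "\<exists>C. \<forall>t\<in>sector c r' \<eta>'. norm (g t) \<le> C * norm t ^ N" for N
  proof -
    obtain C where C: "\<forall>t\<in>sector c r \<eta>. norm (f t) \<le> C * norm t ^ N"
      using bound by blast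
    have "norm (g t) \<le> (\<bar>M\<bar> * C) * norm t ^ N" if t: "t \<in> sector c r' \<eta>'" for t
    proof -
      have "norm (g t) \<le> \<bar>M\<bar> * norm (f t)"
        using dom[OF t] by (meson abs_ge_self mult_right_mono norm_ge_zero order_trans)
      also have "\<dots> \<le> \<bar>M\<bar> * (C * norm t ^ N)"
        using C dom[OF t] by (intro mult_left_mono) auto
      finally show ?thesis
        by (simp add: mult.assoc)
    qed
    then show ?thesis
      by blast
  qed
  then show ?thesis
    unfolding rapid_at_def using \<open>r' > 0\<close> \<open>\<eta>' > 0\<close> by blast
qed

lemma rapid_at_zero: "rapid_at c (\<lambda>t. 0)"
  unfolding rapid_at_def by (auto intro!: exI[of _ 1])

lemma rapid_imp_moderate_at:
  assumes "rapid_at c f"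
  shows "moderate_at c f"
proof -
  obtain r \<eta> C where "r > 0" "\<eta> > 0" and C: "\<forall>t\<in>sector c r \<eta>. norm (f t) \<le> C * norm t ^ 0"
    using assms unfolding rapid_at_def by blast
  then have "eventually (\<lambda>t. norm (f t) \<le> C * norm t powr (- 0)) (at_dir c)"
    by (intro eventually_at_dirI[OF \<open>r > 0\<close> \<open>\<eta> > 0\<close>]) (auto simp: sector_def)
  then show ?thesis
    unfolding moderate_at_def by blast
qed

lemma rapid_at_tendsto_zero:
  assumes "rapid_at c f"
  shows "(f \<longlongrightarrow> 0) (at_dir c)"
proof -
  obtain r \<eta> C where "r > 0" "\<eta> > 0" and C: "\<forall>t\<in>sector c r \<eta>. norm (f t) \<le> C * norm t ^ 1"
    using assms unfolding rapid_at_def by blast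
  then have "eventually (\<lambda>t. norm (f t) \<le> C * norm t) (at_dir c)"
    by (intro eventually_at_dirI[OF \<open>r > 0\<close> \<open>\<eta> > 0\<close>]) auto
  then show ?thesis
    by (rule Lim_null_comparison) (intro tendsto_mult_right_zero tendsto_norm_zero tendsto_at_dir_zero)
qed

section \<open>The exponential coordinate\<close>

definition qexp :: "real \<Rightarrow> complex \<Rightarrow> complex" where
  "qexp \<sigma> s = exp (complex_of_real \<sigma> * (2 * complex_of_real pi * \<i> * s))"

lemma qexp_nonzero [simp]: "qexp \<sigma> s \<noteq> 0"
  by (simp add: qexp_def)

lemma qexp_add: "qexp \<sigma> (a + b) = qexp \<sigma> a * qexp \<sigma> b"
  by (simp add: qexp_def distrib_left exp_add)

lemma norm_qexp: "norm (qexp \<sigma> s) = exp (- \<sigma> * 2 * pi * Im s)"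
  by (simp add: qexp_def)

lemma holomorphic_on_qexp [holomorphic_intros]: "qexp \<sigma> holomorphic_on S"
  unfolding qexp_def by (intro holomorphic_intros)

lemma qexp_minus_one: "qexp (-1) s = inverse (qexp 1 s)"
  by (simp add: qexp_def exp_minus)

lemma qexp_of_int:
  assumes "\<sigma> \<in> {1, -1}"
  shows "qexp \<sigma> (of_int n) = 1"
proof -
  have "\<sigma> * of_int n \<in> \<int>"
    using assms by auto
  then have "cis (2 * pi * (\<sigma> * of_int n)) = 1"
    by (rule cis_multiple_2pi)
  moreover have "complex_of_real \<sigma> * (2 * complex_of_real pi * \<i> * of_int n)
      = \<i> * complex_of_real (2 * pi * (\<sigma> * of_int n))"
    by simp
  ultimately show ?thesis
    unfolding qexp_def by (metis cis_conv_exp)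
qed

lemma qexp_add_1: "\<sigma> \<in> {1, -1} \<Longrightarrow> qexp \<sigma> (s + 1) = qexp \<sigma> s"
  using qexp_add[of \<sigma> s 1] qexp_of_int[of \<sigma> 1] by simp

lemma qexp_eq_imp_int_diff:
  assumes \<sigma>: "\<sigma> \<in> {1, -1}" and eq: "qexp \<sigma> s1 = qexp \<sigma> s2"
  obtains n :: int where "s1 = s2 + of_int n"
proof -
  obtain n :: int where "complex_of_real \<sigma> * (2 * complex_of_real pi * \<i> * s1)
      = complex_of_real \<sigma> * (2 * complex_of_real pi * \<i> * s2) + (of_int (2 * n) * pi) * \<i>"
    using eq unfolding qexp_def exp_eq by blast
  then have "(2 * complex_of_real pi * \<i>) * (complex_of_real \<sigma> * (s1 - s2) - of_int n) = 0"
    by (simp add: algebra_simps)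
  then have "complex_of_real \<sigma> * (s1 - s2) = of_int n"
    by simp
  then have "s1 = s2 + of_int (if \<sigma> = 1 then n else - n)"
    using \<sigma> by (auto simp: algebra_simps)
  then show ?thesis
    using that by blast
qed

lemma qexp_right_inverse_on_ball:
  fixes s0 :: complex
  assumes \<sigma>: "\<sigma> \<in> {1, -1}"
  defines "z0 \<equiv> qexp \<sigma> s0"
  shows "\<exists>L. L holomorphic_on ball z0 (norm z0) \<and> L z0 = s0 \<and> (\<forall>z\<in>ball z0 (norm z0). qexp \<sigma> (L z) = z)"
proof -
  define k where "k = complex_of_real \<sigma> * (2 * complex_of_real pi * \<i>)"
  have z0: "z0 \<noteq> 0" and k: "k \<noteq> 0"
    using \<sigma> by (auto simp: z0_def k_def)
  define L where "L z = s0 + Ln (z / z0) / k" for z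
  have re: "Re (z / z0) > 0" if "z \<in> ball z0 (norm z0)" for z
  proof -
    have "z / z0 - 1 = (z - z0) / z0"
      using z0 by (simp add: field_simps)
    then have "norm (z / z0 - 1) < 1"
      using that z0 by (simp add: norm_divide dist_norm norm_minus_commute)
    then show ?thesis
      using abs_Re_le_cmod[of "z / z0 - 1"] by simp
  qed
  have "z / z0 \<notin> \<real>\<^sub>\<le>\<^sub>0" if "z \<in> ball z0 (norm z0)" for z
    using re[OF that] by (auto simp: complex_nonpos_Reals_iff)
  then have "L holomorphic_on ball z0 (norm z0)"
    unfolding L_def by (intro holomorphic_intros) (use z0 k in auto)
  moreover have "qexp \<sigma> (L z) = z" if "z \<in> ball z0 (norm z0)" for z
  proof -
    have "z / z0 \<noteq> 0"
      using re[OF that] by auto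
    have "qexp \<sigma> (Ln (z / z0) / k) = exp (k * (Ln (z / z0) / k))"
      by (simp add: qexp_def k_def mult.assoc)
    also have "\<dots> = z / z0"
      using k \<open>z / z0 \<noteq> 0\<close> by simp
    finally show ?thesis
      using z0 by (simp add: L_def qexp_add z0_def[symmetric])
  qed
  moreover have "L z0 = s0"
    using z0 by (simp add: L_def)
  ultimately show ?thesis
    by blast
qed

lemma qexp_local_inverse:
  assumes \<sigma>: "\<sigma> \<in> {1, -1}" and D: "open D" "s0 \<in> D"
  shows "\<exists>B L. open B \<and> qexp \<sigma> s0 \<in> B \<and> L holomorphic_on B \<and> L ` B \<subseteq> D
    \<and> (\<forall>z\<in>B. qexp \<sigma> (L z) = z)"
proof -
  define z0 where "z0 = qexp \<sigma> s0"
  obtain L where hol: "L holomorphic_on ball z0 (norm z0)" and "L z0 = s0"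
    and inv: "\<forall>z\<in>ball z0 (norm z0). qexp \<sigma> (L z) = z"
    using qexp_right_inverse_on_ball[OF \<sigma>, of s0] unfolding z0_def by blast
  define B where "B = ball z0 (norm z0) \<inter> L -` D"
  have "open B"
    unfolding B_def using D(1) holomorphic_on_imp_continuous_on[OF hol]
    by (intro continuous_open_preimage) auto
  moreover have "qexp \<sigma> s0 \<in> B"
    using \<open>L z0 = s0\<close> D(2) by (simp add: B_def z0_def)
  moreover have "L holomorphic_on B"
    using hol by (rule holomorphic_on_subset) (auto simp: B_def)
  moreover have "L ` B \<subseteq> D" "\<forall>z\<in>B. qexp \<sigma> (L z) = z"
    using inv by (auto simp: B_def)
  ultimately show ?thesis
    by blast
qed

lemma open_qexp_image:
  assumes "\<sigma> \<in> {1, -1}" "open D"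
  shows "open (qexp \<sigma> ` D)"
  unfolding open_subopen[of "qexp \<sigma> ` D"]
proof
  fix z assume "z \<in> qexp \<sigma> ` D"
  then obtain s0 where "s0 \<in> D" "z = qexp \<sigma> s0"
    by blast
  obtain B L where "open B" "qexp \<sigma> s0 \<in> B" "L holomorphic_on B" "L ` B \<subseteq> D"
    and L: "\<forall>w\<in>B. qexp \<sigma> (L w) = w"
    using qexp_local_inverse[OF assms \<open>s0 \<in> D\<close>] by blast
  have "B \<subseteq> qexp \<sigma> ` D"
  proof
    fix w assume "w \<in> B"
    then have "L w \<in> D" "w = qexp \<sigma> (L w)"
      using L \<open>L ` B \<subseteq> D\<close> by auto
    then show "w \<in> qexp \<sigma> ` D"
      by blast
  qed
  with \<open>open B\<close> \<open>qexp \<sigma> s0 \<in> B\<close> \<open>z = qexp \<sigma> s0\<close> show "\<exists>T. open T \<and> z \<in> T \<and> T \<subseteq> qexp \<sigma> ` D"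
    by blast
qed

lemma connected_qexp_image: "convex D \<Longrightarrow> connected (qexp \<sigma> ` D)"
  using convex_connected connected_continuous_image holomorphic_on_imp_continuous_on holomorphic_on_qexp
  by blast

lemma convex_periodic_shift:
  fixes F :: "complex \<Rightarrow> 'a"
  assumes D: "convex D" and s: "s \<in> D" "s + of_nat n \<in> D"
    and per: "\<And>s. s \<in> D \<Longrightarrow> s + 1 \<in> D \<Longrightarrow> F (s + 1) = F s"
  shows "F (s + of_nat n) = F s"
proof -
  have mem: "s + of_nat k \<in> D" if "k \<le> n" for k
  proof (cases "n = 0")
    case False
    define u where "u = real k / real n"
    have "0 \<le> u" "u \<le> 1"
      using that False by (auto simp: u_def)
    then have "(1 - u) *\<^sub>R s + u *\<^sub>R (s + of_nat n) \<in> D"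
      using convexD[OF D s] by simp
    moreover have "(1 - u) *\<^sub>R s + u *\<^sub>R (s + of_nat n) = s + of_nat k"
      using False by (simp add: u_def scaleR_conv_of_real field_simps)
    ultimately show ?thesis
      by simp
  qed (use that s in simp)
  have "F (s + of_nat k) = F s" if "k \<le> n" for k
    using that
  proof (induction k)
    case (Suc k)
    have "s + of_nat (Suc k) = s + of_nat k + 1"
      by simp
    moreover have "s + of_nat k \<in> D" "s + of_nat (Suc k) \<in> D"
      using mem[of k] mem[of "Suc k"] Suc.prems by simp_all
    ultimately have "F (s + of_nat (Suc k)) = F (s + of_nat k)"
      using per by metis
    with Suc show ?case
      by simp
  qed simp
  then show ?thesis
    by simp
qed

lemma periodic_eq_if_qexp_eq:
  assumes \<sigma>: "\<sigma> \<in> {1, -1}" and D: "convex D"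
    and per: "\<And>s. s \<in> D \<Longrightarrow> s + 1 \<in> D \<Longrightarrow> F (s + 1) = F s"
    and s: "s1 \<in> D" "s2 \<in> D" and eq: "qexp \<sigma> s1 = qexp \<sigma> s2"
  shows "F s1 = F s2"
proof -
  obtain n :: int where n: "s1 = s2 + of_int n"
    using qexp_eq_imp_int_diff[OF \<sigma> eq] .
  show ?thesis
  proof (cases "n \<ge> 0")
    case True
    then have "s1 = s2 + of_nat (nat n)"
      using n by simp
    then show ?thesis
      using convex_periodic_shift[OF D \<open>s2 \<in> D\<close>, of "nat n" F] per s by simp
  next
    case False
    then have "s2 = s1 + of_nat (nat (- n))"
      using n by simp
    then show ?thesis
      using convex_periodic_shift[OF D \<open>s1 \<in> D\<close>, of "nat (- n)" F] per s by simp
  qed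
qed

lemma qexp_descent:
  assumes \<sigma>: "\<sigma> \<in> {1, -1}" and D: "convex D" "open D" and F: "F holomorphic_on D"
    and per: "\<And>s. s \<in> D \<Longrightarrow> s + 1 \<in> D \<Longrightarrow> F (s + 1) = F s"
  obtains g where "g holomorphic_on qexp \<sigma> ` D" "\<And>s. s \<in> D \<Longrightarrow> g (qexp \<sigma> s) = F s"
proof -
  define g where "g z = F (inv_into D (qexp \<sigma>) z)" for z
  have gq: "g (qexp \<sigma> s) = F s" if "s \<in> D" for s
    unfolding g_def using that
    by (intro periodic_eq_if_qexp_eq[where F = F, OF \<sigma> D(1) per]) (auto intro: inv_into_into f_inv_into_f)
  have "g analytic_on qexp \<sigma> ` D"
    unfolding analytic_on_def
  proof
    fix z assume "z \<in> qexp \<sigma> ` D"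
    then obtain s0 where "s0 \<in> D" "z = qexp \<sigma> s0"
      by blast
    obtain B L where B: "open B" "qexp \<sigma> s0 \<in> B" "L holomorphic_on B" "L ` B \<subseteq> D"
      and L: "\<forall>z\<in>B. qexp \<sigma> (L z) = z"
      using qexp_local_inverse[OF \<sigma> D(2) \<open>s0 \<in> D\<close>] by blast
    have "(F \<circ> L) holomorphic_on B"
      using B(3) F B(4) by (rule holomorphic_on_compose_gen)
    moreover have "(F \<circ> L) w = g w" if "w \<in> B" for w
      using gq[of "L w"] L B(4) that by auto
    ultimately have "g holomorphic_on B"
      by (rule holomorphic_transform)
    moreover obtain e where "e > 0" "ball z e \<subseteq> B"
      using B(1,2) \<open>z = qexp \<sigma> s0\<close> open_contains_ball by blast
    ultimately show "\<exists>e>0. g holomorphic_on ball z e"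
      by (blast intro: holomorphic_on_subset)
  qed
  then show ?thesis
    using that gq analytic_imp_holomorphic by blast
qed

lemma eq_on_qexp_image_if_eq_near_point:
  assumes \<sigma>: "\<sigma> \<in> {1, -1}" and D: "convex D" "open D"
    and g1: "g1 holomorphic_on qexp \<sigma> ` D" and g: "g holomorphic_on qexp \<sigma> ` D"
    and V: "open V" "s0 \<in> D \<inter> V" and eq: "\<And>s. s \<in> D \<inter> V \<Longrightarrow> g1 (qexp \<sigma> s) = g (qexp \<sigma> s)"
    and z: "z \<in> qexp \<sigma> ` D"
  shows "g1 z = g z"
proof (rule analytic_continuation_open[where s = "qexp \<sigma> ` (D \<inter> V)" and s' = "qexp \<sigma> ` D" and f = g1])
  show "open (qexp \<sigma> ` (D \<inter> V))" "open (qexp \<sigma> ` D)"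
    using D(2) V(1) by (auto intro!: open_qexp_image[OF \<sigma>])
  show "connected (qexp \<sigma> ` D)"
    using D(1) by (rule connected_qexp_image)
  show "qexp \<sigma> ` (D \<inter> V) \<noteq> {}" "qexp \<sigma> ` (D \<inter> V) \<subseteq> qexp \<sigma> ` D"
    using V(2) by blast+
  show "g1 w = g w" if "w \<in> qexp \<sigma> ` (D \<inter> V)" for w
    using that eq by blast
qed (simp_all add: g1 g z)

section \<open>Truncated cones\<close>

text \<open>Up to shrinking, the image of a sector at \<open>c\<close> under \<open>t \<mapsto> 1/t\<close>; unlike that image it
  is convex, which is what the descent to \<open>qexp\<close> needs.\<close>
definition trunc_cone :: "complex \<Rightarrow> real \<Rightarrow> real \<Rightarrow> complex set" where
  "trunc_cone c R \<kappa> = {s. R < Re (c * s) \<and> \<bar>Im (c * s)\<bar> < \<kappa> * Re (c * s)}"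

lemma trunc_cone_eq_halfspaces:
  "trunc_cone c R \<kappa> = {s. inner (cnj (- c)) s < - R}
     \<inter> {s. inner (cnj ((- \<i> - of_real \<kappa>) * c)) s < 0} \<inter> {s. inner (cnj ((\<i> - of_real \<kappa>) * c)) s < 0}"
  by (auto simp: trunc_cone_def inner_complex_def algebra_simps abs_less_iff)

lemma convex_trunc_cone: "convex (trunc_cone c R \<kappa>)"
  unfolding trunc_cone_eq_halfspaces by (intro convex_Int convex_halfspace_lt)

lemma open_trunc_cone: "open (trunc_cone c R \<kappa>)"
  unfolding trunc_cone_eq_halfspaces by (intro open_Int open_halfspace_lt)

lemma norm_sgn_inverse_minus_unit:
  fixes c s :: complex
  assumes c: "norm c = 1" and s: "s \<noteq> 0"
  shows "norm (sgn (inverse s) - c) = norm (sgn (c * s) - 1)"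
proof -
  have unit_inverse: "inverse u = cnj u" if "norm u = 1" for u :: complex
    using that by (metis complex_norm_square inverse_unique mult.commute of_real_1 power_one)
  have "sgn c = c"
    using c by (simp add: sgn_div_norm)
  then have sgn_cs: "sgn (c * s) = c * sgn s"
    by (metis sgn_mult)
  have "sgn (inverse s) - c = cnj (sgn s - cnj c)"
    using s unit_inverse[of "sgn s"] by (simp add: norm_sgn)
  then have "norm (sgn (inverse s) - c) = norm c * norm (sgn s - cnj c)"
    using c by (simp only: complex_mod_cnj)
  also have "\<dots> = norm (c * sgn s - c * cnj c)"
    by (metis norm_mult right_diff_distrib)
  also have "c * cnj c = 1"
    using c complex_norm_square[of c] by simp
  finally show ?thesis
    by (simp add: sgn_cs)
qed

lemma inverse_trunc_cone_in_sector:
  assumes c: "norm c = 1" and r: "r > 0" and s: "s \<in> trunc_cone c (1/r) (\<eta>/2)"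
  shows "inverse s \<in> sector c r \<eta>"
proof -
  define q where "q = c * s"
  have q: "1/r < Re q" "\<bar>Im q\<bar> < \<eta>/2 * Re q"
    using s by (auto simp: trunc_cone_def q_def)
  have "1/r > 0"
    using r by simp
  then have Re_pos: "Re q > 0"
    using q(1) by linarith
  then have s0: "s \<noteq> 0"
    by (auto simp: q_def)
  have "1/r < norm s"
    using q(1) complex_Re_le_cmod[of q] c by (simp add: q_def norm_mult)
  then have "norm (inverse s) < r"
    using less_imp_inverse_less[of "1/r" "norm s"] r by (simp add: norm_inverse)
  moreover have "norm (sgn (inverse s) - c) < \<eta>"
  proof -
    have "norm (sgn (inverse s) - c) = norm (sgn q - 1)"
      using norm_sgn_inverse_minus_unit[OF c s0] unfolding q_def .
    also have "\<dots> = norm (sgn q - sgn (complex_of_real (Re q)))"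
      using Re_pos by (simp add: sgn_of_real)
    also have "\<dots> \<le> 2 * norm (q - complex_of_real (Re q)) / norm (complex_of_real (Re q))"
      by (rule norm_sgn_diff_le) (use Re_pos in auto)
    also have "norm (q - complex_of_real (Re q)) = \<bar>Im q\<bar>"
      by (simp add: cmod_def)
    also have "2 * \<bar>Im q\<bar> / norm (complex_of_real (Re q)) < \<eta>"
      using q(2) Re_pos by (simp add: divide_less_eq)
    finally show ?thesis .
  qed
  ultimately show ?thesis
    using s0 by (simp add: sector_def)
qed

lemma eventually_at_dir_imp_trunc_cone:
  assumes "norm c = 1" and "eventually P (at_dir c)"
  shows "\<exists>R>0. \<exists>\<kappa>>0. \<forall>s\<in>trunc_cone c R \<kappa>. P (inverse s)"
proof -
  obtain r \<eta> where "r > 0" "\<eta> > 0" and P: "\<forall>t\<in>sector c r \<eta>. P t"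
    using assms(2) unfolding eventually_at_dir by blast
  then have "\<forall>s\<in>trunc_cone c (1/r) (\<eta>/2). P (inverse s)"
    using inverse_trunc_cone_in_sector[OF assms(1) \<open>r > 0\<close>] by blast
  moreover have "1/r > 0" "\<eta>/2 > 0"
    using \<open>r > 0\<close> \<open>\<eta> > 0\<close> by simp_all
  ultimately show ?thesis
    by blast
qed

lemma eventually_at_dir_inverse_in_trunc_cone:
  assumes c: "norm c = 1" and R: "R > 0" and \<kappa>: "\<kappa> > 0"
  shows "eventually (\<lambda>t. inverse t \<in> trunc_cone c R \<kappa>) (at_dir c)"
proof (rule eventually_at_dirI)
  fix t assume t: "t \<in> sector c (1 / (2 * R)) (min (1/2) (\<kappa>/2))"
  then have t0: "t \<noteq> 0" and "norm t < 1 / (2 * R)" and ts: "norm (sgn t - c) < min (1/2) (\<kappa>/2)"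
    by (auto simp: sector_def)
  define q where "q = c * inverse t"
  define e where "e = sgn q"
  have "norm q = inverse (norm t)"
    using c by (simp add: q_def norm_mult norm_inverse)
  then have nq: "norm q > 2 * R"
    using less_imp_inverse_less[of "norm t" "1 / (2 * R)"] \<open>norm t < 1 / (2 * R)\<close> t0 R by simp
  have "norm (e - 1) < min (1/2) (\<kappa>/2)"
    using ts norm_sgn_inverse_minus_unit[OF c, of "inverse t"] t0 by (simp add: e_def q_def)
  then have re: "Re e > 1/2" and im: "\<bar>Im e\<bar> < \<kappa>/2"
    using abs_Re_le_cmod[of "e - 1"] abs_Im_le_cmod[of "e - 1"] by auto
  have "q \<noteq> 0"
    using t0 c by (auto simp: q_def)
  then have q_eq: "q = of_real (norm q) * e"
    by (simp add: e_def sgn_div_norm scaleR_conv_of_real)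
  have "norm q * (1/2) < norm q * Re e"
    using nq re R by (intro mult_strict_left_mono) auto
  then have "R < norm q * Re e"
    using nq by linarith
  moreover have "norm q * \<bar>Im e\<bar> < \<kappa> * (norm q * Re e)"
  proof -
    have "norm q * \<bar>Im e\<bar> < norm q * (\<kappa> * (1/2))"
      using nq im R by (intro mult_strict_left_mono) auto
    also have "\<dots> \<le> norm q * (\<kappa> * Re e)"
      using nq re R \<kappa> by (intro mult_left_mono) auto
    finally show ?thesis
      by (simp add: mult_ac)
  qed
  moreover have "Re q = norm q * Re e" "Im q = norm q * Im e"
    by (subst q_eq, simp)+
  ultimately show "inverse t \<in> trunc_cone c R \<kappa>"
    unfolding trunc_cone_def mem_Collect_eq q_def[symmetric] by (simp add: abs_mult)
qed (use R \<kappa> in auto)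

lemma qexp_preimage_on_ray:
  assumes \<sigma>: "\<sigma> \<in> {1, -1}" and c: "norm c = 1" and sc: "\<sigma> * Im c < 0" and z: "z \<noteq> 0"
  shows "\<exists>d. \<bar>d\<bar> \<le> 1/2 \<and>
    qexp \<sigma> (cnj c * of_real (ln (1 / norm z) / (2 * pi * \<bar>Im c\<bar>)) + of_real d) = z"
proof -
  define a where "a = ln (1 / norm z) / (2 * pi * \<bar>Im c\<bar>)"
  define p where "p = qexp \<sigma> (cnj c * of_real a)"
  have b: "\<bar>Im c\<bar> > 0" and sb: "\<sigma> * Im c = - \<bar>Im c\<bar>"
    using \<sigma> sc by auto
  have "norm p = exp (2 * pi * a * (\<sigma> * Im c))"
    by (simp add: p_def norm_qexp algebra_simps)
  also have "\<dots> = exp (- ln (1 / norm z))"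
    using b by (simp add: sb a_def)
  also have "\<dots> = norm z"
    using z by (simp add: ln_div)
  finally have np: "norm p = norm z" .
  define e where "e = z / p"
  have ne: "norm e = 1"
    using np z by (simp add: e_def norm_divide)
  define d where "d = \<sigma> * Arg e / (2 * pi)"
  have "\<bar>\<sigma>\<bar> = 1"
    using \<sigma> by auto
  then have "\<bar>d\<bar> \<le> 1/2"
    using Arg_bounded[of e] by (simp add: d_def abs_mult abs_le_iff)
  moreover have "qexp \<sigma> (of_real d) = e"
  proof -
    have "\<sigma> * \<sigma> = 1"
      using \<sigma> by auto
    then have "2 * pi * (\<sigma> * d) = Arg e"
      by (simp add: d_def)
    then have eq: "complex_of_real \<sigma> * (2 * complex_of_real pi * \<i> * complex_of_real d)
        = \<i> * of_real (Arg e)"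
      by (simp add: mult_ac flip: \<open>2 * pi * (\<sigma> * d) = Arg e\<close>)
    have "qexp \<sigma> (of_real d) = cis (Arg e)"
      by (simp only: qexp_def eq cis_conv_exp)
    also have "\<dots> = sgn e"
      using ne by (intro cis_Arg) auto
    also have "\<dots> = e"
      using ne by (simp add: sgn_div_norm)
    finally show ?thesis .
  qed
  moreover have "p \<noteq> 0"
    by (simp add: p_def)
  ultimately show ?thesis
    using z by (intro exI[of _ d]) (simp add: qexp_add p_def[symmetric] e_def a_def[symmetric])
qed

lemma ray_plus_bounded_in_trunc_cone:
  assumes c: "norm c = 1" and R: "R \<ge> 0" and \<kappa>: "\<kappa> > 0" and d: "\<bar>d\<bar> \<le> 1/2"
    and a: "R + 1 + 1/\<kappa> < a"
  shows "cnj c * of_real a + of_real d \<in> trunc_cone c R \<kappa>"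
proof -
  have "c * cnj c = 1"
    using c complex_norm_square[of c] by simp
  then have cs: "c * (cnj c * of_real a + of_real d) = of_real a + c * of_real d"
    by (simp add: algebra_simps flip: mult.assoc)
  have "\<bar>Re c\<bar> \<le> 1" "\<bar>Im c\<bar> \<le> 1"
    using abs_Re_le_cmod[of c] abs_Im_le_cmod[of c] c by simp_all
  then have "\<bar>d\<bar> * \<bar>Re c\<bar> \<le> 1/2 * 1" "\<bar>d\<bar> * \<bar>Im c\<bar> \<le> 1/2 * 1"
    using d by (intro mult_mono; simp)+
  then have dRe: "\<bar>d * Re c\<bar> \<le> 1/2" and dIm: "\<bar>d * Im c\<bar> \<le> 1/2"
    by (simp_all add: abs_mult)
  have "1 / \<kappa> < a - 1/2"
    using a R by linarith
  then have "1 < \<kappa> * (a - 1/2)"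
    using \<kappa> by (simp add: field_simps)
  also have "\<dots> \<le> \<kappa> * (a + d * Re c)"
    using dRe \<kappa> by (intro mult_left_mono) auto
  finally have "\<bar>d * Im c\<bar> < \<kappa> * (a + d * Re c)"
    using dIm by linarith
  moreover have "R < a + d * Re c"
  proof -
    have "- (1/2) \<le> d * Re c"
      using dRe by (simp add: abs_le_iff)
    moreover have "1/\<kappa> > 0"
      using \<kappa> by simp
    ultimately show ?thesis
      using a by linarith
  qed
  ultimately show ?thesis
    unfolding trunc_cone_def mem_Collect_eq cs by (simp add: mult.commute)
qed

lemma qexp_trunc_cone_covers_punctured_disc:
  assumes \<sigma>: "\<sigma> \<in> {1, -1}" and c: "norm c = 1" and sc: "\<sigma> * Im c < 0" and R: "R \<ge> 0" and \<kappa>: "\<kappa> > 0"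
  shows "\<exists>\<delta>>0. \<forall>z. 0 < norm z \<and> norm z < \<delta> \<longrightarrow>
    (\<exists>s\<in>trunc_cone c R \<kappa>. qexp \<sigma> s = z \<and> norm s \<le> ln (1 / norm z) / (2 * pi * \<bar>Im c\<bar>) + 1/2)"
proof -
  define b where "b = \<bar>Im c\<bar>"
  have b: "b > 0"
    using sc by (auto simp: b_def)
  define \<delta> where "\<delta> = exp (- (2 * pi * b * (R + 1 + 1/\<kappa>)))"
  have "\<exists>s\<in>trunc_cone c R \<kappa>. qexp \<sigma> s = z \<and> norm s \<le> ln (1 / norm z) / (2 * pi * b) + 1/2"
    if z: "0 < norm z" "norm z < \<delta>" for z
  proof -
    define a where "a = ln (1 / norm z) / (2 * pi * b)"
    have "ln (norm z) < ln \<delta>"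
      using z by (intro ln_less_cancel_iff[THEN iffD2]) (auto simp: \<delta>_def)
    then have "(R + 1 + 1/\<kappa>) * (2 * pi * b) < ln (1 / norm z)"
      using z by (simp add: \<delta>_def ln_div mult_ac)
    then have a_big: "R + 1 + 1/\<kappa> < a"
      using b by (simp add: a_def pos_less_divide_eq)
    have "z \<noteq> 0"
      using z by auto
    then obtain d where d: "\<bar>d\<bar> \<le> 1/2" and q: "qexp \<sigma> (cnj c * of_real a + of_real d) = z"
      using qexp_preimage_on_ray[OF \<sigma> c sc] unfolding a_def b_def by blast
    have "1/\<kappa> > 0"
      using \<kappa> by simp
    then have "a > 0"
      using a_big R by linarith
    then have "norm (cnj c * of_real a + of_real d) \<le> a + 1/2"
      using norm_triangle_ineq[of "cnj c * of_real a" "of_real d"] c d by (simp add: norm_mult)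
    then show ?thesis
      using ray_plus_bounded_in_trunc_cone[OF c R \<kappa> d a_big] q unfolding a_def by blast
  qed
  then show ?thesis
    unfolding b_def[symmetric] by (intro exI[of _ \<delta>]) (auto simp: \<delta>_def)
qed

lemma qexp_trunc_cone_covers_punctured_plane:
  assumes c: "c \<in> {1, -1}" and \<kappa>: "\<kappa> > 0" and z: "z \<noteq> 0"
  shows "\<exists>s\<in>trunc_cone c R \<kappa>. qexp 1 s = z"
proof -
  define s0 where "s0 = Ln z / (2 * complex_of_real pi * \<i>)"
  have "qexp 1 s0 = z"
    using z by (simp add: qexp_def s0_def)
  define M where "M = \<bar>R\<bar> + \<bar>Re s0\<bar> + \<bar>Im s0\<bar> / \<kappa> + 1"
  define m where "m = \<lceil>M\<rceil>"
  have "M \<le> of_int m"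
    by (simp add: m_def)
  define s where "s = s0 + of_int (if c = 1 then m else - m)"
  have "qexp 1 s = z"
    using \<open>qexp 1 s0 = z\<close> qexp_of_int[of 1] by (simp add: s_def qexp_add)
  have "Re (c * s) = (if c = 1 then Re s0 else - Re s0) + of_int m" "\<bar>Im (c * s)\<bar> = \<bar>Im s0\<bar>"
    using c by (auto simp: s_def)
  then have re: "\<bar>R\<bar> + \<bar>Im s0\<bar> / \<kappa> + 1 \<le> Re (c * s)" and im: "\<bar>Im (c * s)\<bar> = \<bar>Im s0\<bar>"
    using \<open>M \<le> of_int m\<close> unfolding M_def by auto
  have "\<bar>Im s0\<bar> / \<kappa> \<ge> 0"
    using \<kappa> by simp
  then have "R < Re (c * s)"
    using re by linarith
  have "\<kappa> * (\<bar>R\<bar> + \<bar>Im s0\<bar> / \<kappa> + 1) = \<kappa> * \<bar>R\<bar> + \<bar>Im s0\<bar> + \<kappa>"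
    using \<kappa> by (simp add: field_simps)
  moreover have "\<kappa> * \<bar>R\<bar> \<ge> 0"
    using \<kappa> by simp
  ultimately have "\<bar>Im s0\<bar> < \<kappa> * (\<bar>R\<bar> + \<bar>Im s0\<bar> / \<kappa> + 1)"
    using \<kappa> by linarith
  also have "\<dots> \<le> \<kappa> * Re (c * s)"
    using re \<kappa> by (intro mult_left_mono) auto
  finally have "s \<in> trunc_cone c R \<kappa>"
    using \<open>R < Re (c * s)\<close> im by (simp add: trunc_cone_def)
  with \<open>qexp 1 s = z\<close> show ?thesis
    by blast
qed

definition qcoord :: "real \<Rightarrow> complex \<Rightarrow> complex" where
  "qcoord \<sigma> t = qexp \<sigma> (inverse t)"

lemma qcoord_inverse [simp]: "qcoord \<sigma> (inverse s) = qexp \<sigma> s"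
  by (simp add: qcoord_def)

lemma ucoord_eq_qcoord: "ucoord = qcoord 1"
  by (simp add: fun_eq_iff ucoord_def qcoord_def qexp_def divide_inverse)

lemma vcoord_eq_qcoord: "vcoord = qcoord (-1)"
  by (simp add: fun_eq_iff vcoord_def ucoord_def qcoord_def qexp_def divide_inverse exp_minus)

lemma qcoord_moebius:
  assumes "\<sigma> \<in> {1, -1}" "t \<noteq> 0" "1 + t \<noteq> 0"
  shows "qcoord \<sigma> (t / (1 + t)) = qcoord \<sigma> t"
proof -
  have "inverse (t / (1 + t)) = inverse t + 1"
    using assms by (simp add: field_simps)
  then show ?thesis
    using qexp_add_1[OF assms(1)] by (simp add: qcoord_def)
qed

lemma holomorphic_on_qcoord: "qcoord \<sigma> holomorphic_on - {0}"
  unfolding qcoord_def by (intro holomorphic_intros holomorphic_on_compose_gen[OF _ holomorphic_on_qexp,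
      unfolded o_def]) auto

lemma norm_qcoord_le:
  assumes \<sigma>: "\<sigma> \<in> {1, -1}" and sc: "\<sigma> * Im c < 0" and t: "t \<in> sector c r (\<bar>Im c\<bar>/2)"
  shows "norm (qcoord \<sigma> t) \<le> exp (- (pi * \<bar>Im c\<bar>) / norm t)"
proof -
  define b where "b = \<bar>Im c\<bar>"
  have sb: "\<sigma> * Im c = - b"
    using \<sigma> sc by (auto simp: b_def)
  have t0: "t \<noteq> 0" and ts: "norm (sgn t - c) < b/2"
    using t by (auto simp: sector_def b_def)
  have "\<bar>Im (sgn t) - Im c\<bar> < b/2"
    using abs_Im_le_cmod[of "sgn t - c"] ts by simp
  moreover have "\<sigma> * (Im (sgn t) - Im c) \<le> \<bar>Im (sgn t) - Im c\<bar>"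
    using \<sigma> by auto
  ultimately have si: "\<sigma> * Im (sgn t) < - b/2"
    using sb by (simp add: algebra_simps)
  have "Im (inverse t) = - Im t / (norm t)\<^sup>2" "Im (sgn t) = Im t / norm t"
    by (simp_all add: cmod_power2 sgn_div_norm divide_inverse mult.commute)
  then have "- \<sigma> * 2 * pi * Im (inverse t) = 2 * pi * (\<sigma> * Im (sgn t)) / norm t"
    using t0 by (simp add: power2_eq_square field_simps)
  also have "\<dots> \<le> 2 * pi * (- b/2) / norm t"
    using si t0 by (intro divide_right_mono mult_left_mono) auto
  finally show ?thesis
    by (simp add: qcoord_def norm_qexp b_def)
qed

lemma tendsto_qcoord_at_dir:
  assumes \<sigma>: "\<sigma> \<in> {1, -1}" and sc: "\<sigma> * Im c < 0"
  shows "(qcoord \<sigma> \<longlongrightarrow> 0) (at_dir c)"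
proof (rule Lim_null_comparison)
  have "\<bar>Im c\<bar> / 2 > 0"
    using sc by auto
  then show "eventually (\<lambda>t. norm (qcoord \<sigma> t) \<le> exp (- (pi * \<bar>Im c\<bar>) / norm t)) (at_dir c)"
    using norm_qcoord_le[OF \<sigma> sc] by (intro eventually_at_dirI[of 1 "\<bar>Im c\<bar> / 2"]) auto
  have "((\<lambda>x. exp (- (pi * \<bar>Im c\<bar>) / x)) \<longlongrightarrow> 0) (at_right 0)"
    using \<open>\<bar>Im c\<bar> / 2 > 0\<close> by real_asymp
  then show "((\<lambda>t. exp (- (pi * \<bar>Im c\<bar>) / norm t)) \<longlongrightarrow> 0) (at_dir c)"
    by (rule filterlim_compose[OF _ filterlim_norm_at_dir])
qed

lemma filterlim_qcoord_at_dir: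
  assumes "\<sigma> \<in> {1, -1}" "\<sigma> * Im c < 0"
  shows "filterlim (qcoord \<sigma>) (at 0) (at_dir c)"
  unfolding filterlim_at using tendsto_qcoord_at_dir[OF assms] by (simp add: qcoord_def)

lemma rapid_at_qcoord:
  assumes \<sigma>: "\<sigma> \<in> {1, -1}" and sc: "\<sigma> * Im c < 0"
  shows "rapid_at c (qcoord \<sigma>)"
proof -
  define b where "b = \<bar>Im c\<bar>"
  have b: "b > 0"
    using sc by (auto simp: b_def)
  have "norm (qcoord \<sigma> t) \<le> (real N / (pi * b)) ^ N * norm t ^ N" if t: "t \<in> sector c 1 (b/2)" for N t
  proof -
    have nt: "norm t > 0"
      using t by (auto simp: sector_def)
    have "norm (qcoord \<sigma> t) \<le> exp (- (pi * b / norm t))"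
      using norm_qcoord_le[OF \<sigma> sc] t by (simp add: b_def)
    also have "\<dots> \<le> (real N / (pi * b / norm t)) ^ N"
      using b nt by (intro exp_neg_le_power) auto
    also have "real N / (pi * b / norm t) = real N / (pi * b) * norm t"
      using nt b by (simp add: field_simps)
    also have "(real N / (pi * b) * norm t) ^ N = (real N / (pi * b)) ^ N * norm t ^ N"
      by (rule power_mult_distrib)
    finally show ?thesis .
  qed
  then show ?thesis
    unfolding rapid_at_def using b by (intro exI[of _ 1] conjI exI[of _ "b/2"]) auto
qed

lemma per_section_comp_qcoord:
  assumes U: "U \<subseteq> sphere 0 1" and \<sigma>: "\<sigma> \<in> {1, -1}" and G: "open G" "g holomorphic_on G"
    and inG: "eventually (\<lambda>t. qcoord \<sigma> t \<in> G) (at_arc U)"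
  shows "per_section U (\<lambda>t. g (qcoord \<sigma> t))"
proof -
  have "eventually (\<lambda>t. t \<noteq> 0 \<and> norm t < 1) (at_arc U)"
    by (simp add: eventually_at_arc eventually_at_dir_small)
  with inG have "eventually (\<lambda>t. (\<lambda>t. g (qcoord \<sigma> t)) field_differentiable (at t)
      \<and> g (qcoord \<sigma> (t / (1 + t))) = g (qcoord \<sigma> t)) (at_arc U)"
  proof eventually_elim
    case (elim t)
    then have "1 + t \<noteq> 0"
      by (auto simp: add_eq_0_iff)
    have "qcoord \<sigma> field_differentiable (at t)"
      using holomorphic_on_qcoord[of \<sigma>] elim by (intro holomorphic_on_imp_differentiable_at) auto
    moreover have "g field_differentiable (at (qcoord \<sigma> t))"
      using G elim by (intro holomorphic_on_imp_differentiable_at) auto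
    ultimately have "(g \<circ> qcoord \<sigma>) field_differentiable (at t)"
      by (rule field_differentiable_compose)
    then show ?case
      using qcoord_moebius[OF \<sigma>] elim \<open>1 + t \<noteq> 0\<close> by (simp add: o_def)
  qed
  then show ?thesis
    by (simp add: per_section_iff[OF U])
qed

section \<open>Descent along an arc\<close>

lemma periodic_descends_on_trunc_cone:
  assumes \<sigma>: "\<sigma> \<in> {1, -1}" and R: "R > 0"
    and per: "\<forall>s\<in>trunc_cone c R \<kappa>. f field_differentiable (at (inverse s))
                \<and> f (inverse s / (1 + inverse s)) = f (inverse s)"
  shows "\<exists>g. g holomorphic_on qexp \<sigma> ` trunc_cone c R \<kappa> \<and>
           (\<forall>s\<in>trunc_cone c R \<kappa>. f (inverse s) = g (qexp \<sigma> s))"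
proof -
  define D where "D = trunc_cone c R \<kappa>"
  have D0: "s \<noteq> 0" if "s \<in> D" for s
    using that R by (auto simp: D_def trunc_cone_def)
  have "inverse holomorphic_on D"
    using D0 by (intro holomorphic_intros) auto
  moreover have "f holomorphic_on inverse ` D"
    using per unfolding holomorphic_on_def D_def by (auto intro: field_differentiable_at_within)
  ultimately have F: "(f \<circ> inverse) holomorphic_on D"
    by (rule holomorphic_on_compose_gen) simp
  have "(f \<circ> inverse) (s + 1) = (f \<circ> inverse) s" if "s \<in> D" "s + 1 \<in> D" for s
  proof -
    have "inverse s / (1 + inverse s) = inverse (s + 1)"
      using D0[OF that(1)] D0[OF that(2)] by (simp add: field_simps)
    then show ?thesis
      using per that(1) by (auto simp: D_def)
  qed
  then obtain g where "g holomorphic_on qexp \<sigma> ` D" "\<And>s. s \<in> D \<Longrightarrow> g (qexp \<sigma> s) = (f \<circ> inverse) s"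
    using qexp_descent[OF \<sigma> convex_trunc_cone open_trunc_cone F[unfolded D_def]] unfolding D_def by metis
  then show ?thesis
    unfolding D_def by auto
qed

text \<open>Near \<open>c1\<close>, \<open>f\<close> is a holomorphic function \<open>g1\<close> of \<open>qcoord \<sigma>\<close> on the connected image of
  a truncated cone; agreement at a nearby direction gives \<open>g1 = g\<close> on an open part of that
  image, hence on all of it.\<close>
lemma agreement_spreads_from_nearby_dir:
  assumes \<sigma>: "\<sigma> \<in> {1, -1}" and c1: "norm c1 = 1" and g: "g holomorphic_on G"
    and per: "eventually (\<lambda>t. (f field_differentiable (at t) \<and> f (t / (1 + t)) = f t)
                \<and> qcoord \<sigma> t \<in> G) (at_dir c1)"
  shows "\<exists>e>0. \<forall>c. norm c = 1 \<and> norm (c - c1) < e \<and> eventually (\<lambda>t. f t = g (qcoord \<sigma> t)) (at_dir c)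
           \<longrightarrow> eventually (\<lambda>t. f t = g (qcoord \<sigma> t)) (at_dir c1)"
proof -
  obtain R \<kappa> where "R > 0" "\<kappa> > 0" and P: "\<forall>s\<in>trunc_cone c1 R \<kappa>.
      (f field_differentiable (at (inverse s)) \<and> f (inverse s / (1 + inverse s)) = f (inverse s))
      \<and> qexp \<sigma> s \<in> G"
    using eventually_at_dir_imp_trunc_cone[OF c1 per] by auto
  define D where "D = trunc_cone c1 R \<kappa>"
  obtain g1 where g1: "g1 holomorphic_on qexp \<sigma> ` D" and fg1: "\<forall>s\<in>D. f (inverse s) = g1 (qexp \<sigma> s)"
    using periodic_descends_on_trunc_cone[OF \<sigma> \<open>R > 0\<close>] P unfolding D_def by blast
  obtain r1 \<eta>1 where "r1 > 0" "\<eta>1 > 0" and inD: "\<forall>t\<in>sector c1 r1 \<eta>1. inverse t \<in> D"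
    using eventually_at_dir_inverse_in_trunc_cone[OF c1 \<open>R > 0\<close> \<open>\<kappa> > 0\<close>]
    unfolding eventually_at_dir D_def by blast
  have "eventually (\<lambda>t. f t = g (qcoord \<sigma> t)) (at_dir c1)"
    if c: "norm c = 1" "norm (c - c1) < \<eta>1" and fg: "eventually (\<lambda>t. f t = g (qcoord \<sigma> t)) (at_dir c)" for c
  proof -
    obtain r \<eta> where "r > 0" "\<eta> > 0" and fg': "\<forall>t\<in>sector c r \<eta>. f t = g (qcoord \<sigma> t)"
      using fg unfolding eventually_at_dir by blast
    define V where "V = (- {0}) \<inter> inverse -` sector c r \<eta>"
    have "open V"
      unfolding V_def by (intro continuous_open_preimage continuous_intros open_sector) auto
    obtain t0 where "t0 \<in> sector c1 r1 \<eta>1" "t0 \<in> sector c r \<eta>"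
      using sectors_at_nearby_dirs_meet[OF c \<open>r1 > 0\<close> \<open>r > 0\<close> \<open>\<eta> > 0\<close>] by blast
    then have "inverse t0 \<in> D \<inter> V"
      using inD by (auto simp: V_def sector_def)
    have gD: "g holomorphic_on qexp \<sigma> ` D"
      using P by (intro holomorphic_on_subset[OF g]) (auto simp: D_def)
    have "g1 (qexp \<sigma> s) = g (qexp \<sigma> s)" if "s \<in> D \<inter> V" for s
    proof -
      have "inverse s \<in> sector c r \<eta>"
        using that by (simp add: V_def)
      then have "f (inverse s) = g (qexp \<sigma> s)"
        using fg' by simp
      then show ?thesis
        using fg1 that by simp
    qed
    moreover have "convex D" "open D"
      unfolding D_def by (rule convex_trunc_cone open_trunc_cone)+
    ultimately have eq: "g1 z = g z" if "z \<in> qexp \<sigma> ` D" for z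
      using eq_on_qexp_image_if_eq_near_point[OF \<sigma> _ _ g1 gD \<open>open V\<close> \<open>inverse t0 \<in> D \<inter> V\<close> _ that]
      by blast
    have "f t = g (qcoord \<sigma> t)" if "t \<in> sector c1 r1 \<eta>1" for t
      using fg1 eq inD that by (metis image_eqI inverse_inverse_eq qcoord_def)
    then show ?thesis
      using \<open>r1 > 0\<close> \<open>\<eta>1 > 0\<close> by (intro eventually_at_dirI)
  qed
  then show ?thesis
    using \<open>\<eta>1 > 0\<close> by blast
qed

lemma agreement_propagates_along_arc:
  assumes U: "U \<subseteq> sphere 0 1" "connected U" and \<sigma>: "\<sigma> \<in> {1, -1}" and g: "g holomorphic_on G"
    and per: "eventually (\<lambda>t. (f field_differentiable (at t) \<and> f (t / (1 + t)) = f t)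
                \<and> qcoord \<sigma> t \<in> G) (at_arc U)"
    and c0: "c0 \<in> U" "eventually (\<lambda>t. f t = g (qcoord \<sigma> t)) (at_dir c0)"
  shows "eventually (\<lambda>t. f t = g (qcoord \<sigma> t)) (at_arc U)"
proof -
  define A where "A = {c \<in> U. eventually (\<lambda>t. f t = g (qcoord \<sigma> t)) (at_dir c)}"
  have "openin (top_of_set U) A"
    unfolding openin_euclidean_subtopology_iff A_def
    using eventually_at_dir_nearby by (fastforce simp: dist_norm)
  moreover have "openin (top_of_set U) (U - A)"
    unfolding openin_euclidean_subtopology_iff
  proof (intro conjI ballI)
    fix c1 assume c1: "c1 \<in> U - A"
    then have "norm c1 = 1"
      using U(1) by auto
    then obtain e where "e > 0" and e: "\<forall>c. norm c = 1 \<and> norm (c - c1) < e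
        \<and> eventually (\<lambda>t. f t = g (qcoord \<sigma> t)) (at_dir c) \<longrightarrow> c1 \<in> A"
      using agreement_spreads_from_nearby_dir[OF \<sigma> _ g] per c1 unfolding eventually_at_arc A_def by blast
    have "c \<in> U - A" if "c \<in> U" "dist c c1 < e" for c
      using that e c1 U(1) by (auto simp: A_def dist_norm)
    then show "\<exists>e>0. \<forall>c\<in>U. dist c c1 < e \<longrightarrow> c \<in> U - A"
      using \<open>e > 0\<close> by blast
  qed auto
  moreover have "c0 \<in> A"
    using c0 by (simp add: A_def)
  ultimately have "U - A = {}"
    using U(2) unfolding connected_openin by blast
  then show ?thesis
    unfolding eventually_at_arc A_def by blast
qed

section \<open>Removable singularities\<close>

lemma moderate_at_imp_trunc_cone_bound:
  assumes c: "norm c = 1" and m: "moderate_at c (\<lambda>t. g (qcoord \<sigma> t))"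
  shows "\<exists>C\<ge>0. \<exists>N\<ge>0. \<exists>R>0. \<exists>\<kappa>>0. \<forall>s\<in>trunc_cone c R \<kappa>. norm (g (qexp \<sigma> s)) \<le> C * norm s powr N"
proof -
  obtain C N where bound: "eventually (\<lambda>t. norm (g (qcoord \<sigma> t)) \<le> C * norm t powr (- N)) (at_dir c)"
    using m unfolding moderate_at_def by blast
  define C' N' where "C' = max C 0" and "N' = max N 0"
  have "eventually (\<lambda>t. norm (g (qcoord \<sigma> t)) \<le> C' * norm (inverse t) powr N') (at_dir c)"
    using bound eventually_at_dir_small[OF zero_less_one, of c]
  proof eventually_elim
    case (elim t)
    have "C * norm t powr (- N) \<le> C' * norm t powr (- N)"
      by (intro mult_right_mono) (auto simp: C'_def)
    with elim have "norm (g (qcoord \<sigma> t)) \<le> C' * norm t powr (- N)"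
      by linarith
    also have "\<dots> \<le> C' * norm t powr (- N')"
      using elim by (intro mult_left_mono powr_mono') (auto simp: C'_def N'_def)
    finally show ?case
      by (simp add: norm_inverse powr_minus inverse_powr)
  qed
  then have "\<exists>R>0. \<exists>\<kappa>>0. \<forall>s\<in>trunc_cone c R \<kappa>.
      norm (g (qcoord \<sigma> (inverse s))) \<le> C' * norm (inverse (inverse s)) powr N'"
    by (rule eventually_at_dir_imp_trunc_cone[OF c])
  moreover have "C' \<ge> 0" "N' \<ge> 0"
    by (simp_all add: C'_def N'_def)
  ultimately show ?thesis
    by auto
qed

text \<open>Along a direction where \<open>qcoord \<sigma>\<close> decays, moderate growth of \<open>g \<circ> qcoord \<sigma>\<close> means
  \<open>g z = O(ln (1/\<bar>z\<bar>) ^ N)\<close>, so \<open>z g(z) \<rightarrow> 0\<close>.\<close>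
lemma removable_singularity_if_moderate_at:
  assumes \<sigma>: "\<sigma> \<in> {1, -1}" and c: "norm c = 1" and sc: "\<sigma> * Im c < 0" and \<delta>0: "\<delta>0 > 0"
    and g: "g holomorphic_on ball 0 \<delta>0 - {0}" and m: "moderate_at c (\<lambda>t. g (qcoord \<sigma> t))"
  shows "\<exists>h. h holomorphic_on ball 0 \<delta>0 \<and> (\<forall>z\<in>ball 0 \<delta>0 - {0}. h z = g z)"
proof -
  obtain C' N' R \<kappa> where "C' \<ge> 0" "N' \<ge> 0" "R > 0" "\<kappa> > 0"
    and bd: "\<forall>s\<in>trunc_cone c R \<kappa>. norm (g (qexp \<sigma> s)) \<le> C' * norm s powr N'"
    using moderate_at_imp_trunc_cone_bound[OF c m] by blast
  define b where "b = \<bar>Im c\<bar>"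
  have b: "b > 0"
    using sc by (auto simp: b_def)
  obtain \<delta> where "\<delta> > 0" and cover: "\<forall>z. 0 < norm z \<and> norm z < \<delta> \<longrightarrow>
      (\<exists>s\<in>trunc_cone c R \<kappa>. qexp \<sigma> s = z \<and> norm s \<le> ln (1 / norm z) / (2 * pi * b) + 1/2)"
    using qexp_trunc_cone_covers_punctured_disc[OF \<sigma> c sc less_imp_le[OF \<open>R > 0\<close>] \<open>\<kappa> > 0\<close>]
    unfolding b_def by blast
  define \<phi> where "\<phi> x = C' * (x * (ln (1 / x) * (1 / (2 * pi * b)) + 1/2) powr N')" for x
  have "norm ((z - 0) * g z) \<le> \<phi> (norm z)" if z: "0 < norm z" "norm z < \<delta>" for z
  proof -
    obtain s where s: "s \<in> trunc_cone c R \<kappa>" "qexp \<sigma> s = z"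
      and ns: "norm s \<le> ln (1 / norm z) / (2 * pi * b) + 1/2"
      using cover z by blast
    have "norm (g z) \<le> C' * norm s powr N'"
      using bd s by blast
    also have "\<dots> \<le> C' * (ln (1 / norm z) / (2 * pi * b) + 1/2) powr N'"
      using ns \<open>C' \<ge> 0\<close> \<open>N' \<ge> 0\<close> by (intro mult_left_mono powr_mono2) auto
    finally have "norm z * norm (g z) \<le> norm z * (C' * (ln (1 / norm z) / (2 * pi * b) + 1/2) powr N')"
      by (rule mult_left_mono) simp
    then show ?thesis
      by (simp add: \<phi>_def norm_mult mult_ac)
  qed
  then have ev: "eventually (\<lambda>z. norm ((z - 0) * g z) \<le> \<phi> (norm z)) (at 0)"
    unfolding eventually_at using \<open>\<delta> > 0\<close> by (auto simp: dist_norm)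
  have "(\<phi> \<longlongrightarrow> 0) (at_right 0)"
    unfolding \<phi>_def using b \<open>N' \<ge> 0\<close> by (intro tendsto_mult_right_zero tendsto_log_power_mult_at_right) auto
  moreover have "filterlim (\<lambda>z::complex. norm z) (at_right 0) (at 0)"
    unfolding filterlim_at
    using tendsto_norm_zero[OF tendsto_ident_at[of "0::complex" UNIV]] by (auto simp: eventually_at_filter)
  ultimately have "((\<lambda>z. \<phi> (norm z)) \<longlongrightarrow> 0) (at (0::complex))"
    by (rule filterlim_compose)
  with ev have "((\<lambda>z. (z - 0) * g z) \<longlongrightarrow> 0) (at 0)"
    by (rule Lim_null_comparison)
  then show ?thesis
    using holomorphic_on_extend_lim[OF g] \<delta>0 by simp
qed

section \<open>Arcs in an open half-plane\<close>

locale decaying_arc =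
  fixes \<sigma> :: real and U :: "complex set"
  assumes sigma: "\<sigma> \<in> {1, -1}" and U_sphere: "U \<subseteq> sphere 0 1" and U_connected: "connected U"
    and U_nonempty: "U \<noteq> {}" and decay: "\<And>c. c \<in> U \<Longrightarrow> \<sigma> * Im c < 0"
begin

lemma norm_of_dir: "c \<in> U \<Longrightarrow> norm c = 1"
  using U_sphere by auto

lemma eventually_qcoord_in_punctured_ball:
  assumes "\<delta> > 0"
  shows "eventually (\<lambda>t. qcoord \<sigma> t \<in> ball 0 \<delta> - {0}) (at_arc U)"
  unfolding eventually_at_arc
proof
  fix c assume "c \<in> U"
  then have "eventually (\<lambda>t. dist (qcoord \<sigma> t) 0 < \<delta>) (at_dir c)"
    using tendsto_qcoord_at_dir[OF sigma decay] assms unfolding tendsto_iff by blast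
  then show "eventually (\<lambda>t. qcoord \<sigma> t \<in> ball 0 \<delta> - {0}) (at_dir c)"
    by (rule eventually_mono) (simp add: qcoord_def dist_commute)
qed

lemma per_section_comp:
  "\<rho> > 0 \<Longrightarrow> g holomorphic_on ball 0 \<rho> - {0} \<Longrightarrow> per_section U (\<lambda>t. g (qcoord \<sigma> t))"
  by (rule per_section_comp_qcoord[OF U_sphere sigma _ _ eventually_qcoord_in_punctured_ball]) auto

lemma punctured_ball_subset_qexp_trunc_cone:
  assumes "c \<in> U" "R > 0" "\<kappa> > 0"
  shows "\<exists>\<delta>>0. ball 0 \<delta> - {0} \<subseteq> qexp \<sigma> ` trunc_cone c R \<kappa>"
proof -
  obtain \<delta> where "\<delta> > 0" and cover: "\<forall>z. 0 < norm z \<and> norm z < \<delta> \<longrightarrow> (\<exists>s\<in>trunc_cone c R \<kappa>. qexp \<sigma> s = z)"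
    using qexp_trunc_cone_covers_punctured_disc[OF sigma norm_of_dir decay less_imp_le, OF assms(1,1,2,3)]
    by blast
  have "ball 0 \<delta> - {0} \<subseteq> qexp \<sigma> ` trunc_cone c R \<kappa>"
  proof
    fix z :: complex assume "z \<in> ball 0 \<delta> - {0}"
    then have "\<exists>s\<in>trunc_cone c R \<kappa>. qexp \<sigma> s = z"
      using cover by (simp add: dist_norm)
    then show "z \<in> qexp \<sigma> ` trunc_cone c R \<kappa>"
      by blast
  qed
  with \<open>\<delta> > 0\<close> show ?thesis
    by blast
qed

lemma germ_determines_function:
  assumes "eventually (\<lambda>t. g1 (qcoord \<sigma> t) = g2 (qcoord \<sigma> t)) (at_arc U)"
  shows "\<exists>\<rho>>0. \<forall>z\<in>ball 0 \<rho> - {0}. g1 z = g2 z"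
proof -
  obtain c where c: "c \<in> U"
    using U_nonempty by blast
  then have "\<exists>R>0. \<exists>\<kappa>>0. \<forall>s\<in>trunc_cone c R \<kappa>. g1 (qcoord \<sigma> (inverse s)) = g2 (qcoord \<sigma> (inverse s))"
    using assms by (intro eventually_at_dir_imp_trunc_cone norm_of_dir) (auto simp: eventually_at_arc)
  then obtain R \<kappa> where "R > 0" "\<kappa> > 0" and eq: "\<forall>s\<in>trunc_cone c R \<kappa>. g1 (qexp \<sigma> s) = g2 (qexp \<sigma> s)"
    by auto
  obtain \<delta> where "\<delta> > 0" and sub: "ball 0 \<delta> - {0} \<subseteq> qexp \<sigma> ` trunc_cone c R \<kappa>"
    using punctured_ball_subset_qexp_trunc_cone[OF c \<open>R > 0\<close> \<open>\<kappa> > 0\<close>] by blast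
  have "g1 z = g2 z" if "z \<in> ball 0 \<delta> - {0}" for z
    using sub that eq by auto
  then show ?thesis
    using \<open>\<delta> > 0\<close> by blast
qed

lemma periodic_section_descends:
  assumes "per_section U f"
  shows "\<exists>\<rho>>0. \<exists>g. g holomorphic_on ball 0 \<rho> - {0} \<and> eventually (\<lambda>t. f t = g (qcoord \<sigma> t)) (at_arc U)"
proof -
  have per: "eventually (\<lambda>t. f field_differentiable (at t) \<and> f (t / (1 + t)) = f t) (at_arc U)"
    using assms per_section_iff[OF U_sphere] by blast
  obtain c where c: "c \<in> U"
    using U_nonempty by blast
  then obtain R \<kappa> where "R > 0" "\<kappa> > 0" and P: "\<forall>s\<in>trunc_cone c R \<kappa>. f field_differentiable (at (inverse s))
      \<and> f (inverse s / (1 + inverse s)) = f (inverse s)"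
    using per eventually_at_dir_imp_trunc_cone[OF norm_of_dir[OF c]] unfolding eventually_at_arc by blast
  obtain g where g: "g holomorphic_on qexp \<sigma> ` trunc_cone c R \<kappa>"
    and fg: "\<forall>s\<in>trunc_cone c R \<kappa>. f (inverse s) = g (qexp \<sigma> s)"
    using periodic_descends_on_trunc_cone[OF sigma \<open>R > 0\<close> P] by blast
  obtain \<delta> where "\<delta> > 0" and sub: "ball 0 \<delta> - {0} \<subseteq> qexp \<sigma> ` trunc_cone c R \<kappa>"
    using punctured_ball_subset_qexp_trunc_cone[OF c \<open>R > 0\<close> \<open>\<kappa> > 0\<close>] by blast
  have g\<delta>: "g holomorphic_on ball 0 \<delta> - {0}"
    using g sub by (rule holomorphic_on_subset)
  have "eventually (\<lambda>t. inverse t \<in> trunc_cone c R \<kappa>) (at_dir c)"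
    by (rule eventually_at_dir_inverse_in_trunc_cone[OF norm_of_dir[OF c] \<open>R > 0\<close> \<open>\<kappa> > 0\<close>])
  then have "eventually (\<lambda>t. f t = g (qcoord \<sigma> t)) (at_dir c)"
    by (rule eventually_mono) (use fg in \<open>metis inverse_inverse_eq qcoord_def\<close>)
  moreover have "eventually (\<lambda>t. (f field_differentiable (at t) \<and> f (t / (1 + t)) = f t)
      \<and> qcoord \<sigma> t \<in> ball 0 \<delta> - {0}) (at_arc U)"
    using per eventually_qcoord_in_punctured_ball[OF \<open>\<delta> > 0\<close>] by (rule eventually_conj)
  ultimately have "eventually (\<lambda>t. f t = g (qcoord \<sigma> t)) (at_arc U)"
    by (intro agreement_propagates_along_arc[OF U_sphere U_connected sigma g\<delta> _ c])
  then show ?thesis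
    using g\<delta> \<open>\<delta> > 0\<close> by blast
qed

lemma tendsto_comp_qcoord:
  assumes "\<rho> > 0" "h holomorphic_on ball 0 \<rho>" "c \<in> U"
  shows "((\<lambda>t. h (qcoord \<sigma> t)) \<longlongrightarrow> h 0) (at_dir c)"
proof -
  have "isCont h 0"
    using assms by (intro holomorphic_on_imp_continuous_on[THEN continuous_on_interior]) auto
  then show ?thesis
    using tendsto_qcoord_at_dir[OF sigma decay[OF assms(3)]] by (rule isCont_tendsto_compose)
qed

lemma moderate_periodic_extends:
  assumes "per_section U f" "moderate_section U f"
  shows "\<exists>\<rho>>0. \<exists>h. h holomorphic_on ball 0 \<rho> \<and> eventually (\<lambda>t. f t = h (qcoord \<sigma> t)) (at_arc U)"
proof -
  obtain \<rho> g where "\<rho> > 0" and g: "g holomorphic_on ball 0 \<rho> - {0}"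
    and fg: "eventually (\<lambda>t. f t = g (qcoord \<sigma> t)) (at_arc U)"
    using periodic_section_descends[OF assms(1)] by blast
  obtain c where c: "c \<in> U"
    using U_nonempty by blast
  then have "moderate_at c f"
    using assms(2) moderate_section_iff[OF U_sphere] by blast
  then have "moderate_at c (\<lambda>t. g (qcoord \<sigma> t))"
    using eventually_at_arc_imp_at_dir[OF fg c] by (rule moderate_at_cong)
  then obtain h where h: "h holomorphic_on ball 0 \<rho>" and hg: "\<forall>z\<in>ball 0 \<rho> - {0}. h z = g z"
    using removable_singularity_if_moderate_at[OF sigma norm_of_dir[OF c] decay[OF c] \<open>\<rho> > 0\<close> g] by blast
  have "eventually (\<lambda>t. f t = h (qcoord \<sigma> t)) (at_arc U)"
    using fg eventually_qcoord_in_punctured_ball[OF \<open>\<rho> > 0\<close>] by eventually_elim (use hg in auto)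
  then show ?thesis
    using h \<open>\<rho> > 0\<close> by blast
qed

lemma per_section_if_extends:
  assumes "\<rho> > 0" "h holomorphic_on ball 0 \<rho>" "eventually (\<lambda>t. f t = h (qcoord \<sigma> t)) (at_arc U)"
  shows "per_section U f"
proof -
  have "per_section U (\<lambda>t. h (qcoord \<sigma> t))"
    using assms(1,2) by (intro per_section_comp) (auto intro: holomorphic_on_subset)
  moreover have "eventually (\<lambda>t. h (qcoord \<sigma> t) = f t) (at_arc U)"
    using assms(3) by (rule eventually_mono) simp
  ultimately show ?thesis
    by (rule per_section_cong[OF U_sphere])
qed

lemma moderate_if_extends:
  assumes "\<rho> > 0" "h holomorphic_on ball 0 \<rho>" "eventually (\<lambda>t. f t = h (qcoord \<sigma> t)) (at_arc U)"
  shows "per_section U f \<and> moderate_section U f"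
proof -
  have "moderate_at c f" if "c \<in> U" for c
  proof (rule moderate_at_mono[OF moderate_at_const[of c "of_real (norm (h 0) + 1)"]])
    have "((\<lambda>t. norm (h (qcoord \<sigma> t))) \<longlongrightarrow> norm (h 0)) (at_dir c)"
      by (rule tendsto_norm[OF tendsto_comp_qcoord[OF assms(1,2) that]])
    then have "eventually (\<lambda>t. norm (h (qcoord \<sigma> t)) < norm (h 0) + 1) (at_dir c)"
      by (rule order_tendstoD) simp
    moreover have "eventually (\<lambda>t. f t = h (qcoord \<sigma> t)) (at_dir c)"
      using assms(3) that by (rule eventually_at_arc_imp_at_dir)
    ultimately show "eventually (\<lambda>t. norm (f t) \<le> norm (complex_of_real (norm (h 0) + 1))) (at_dir c)"
      by eventually_elim auto
  qed
  moreover have "per_section U f"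
    using per_section_if_extends[OF assms] .
  ultimately show ?thesis
    using moderate_section_iff[OF U_sphere] per_section_def by blast
qed

lemma rapid_periodic_extends:
  assumes "per_section U f" "rapid_section U f"
  shows "\<exists>\<rho>>0. \<exists>h. h holomorphic_on ball 0 \<rho> \<and> h 0 = 0 \<and> eventually (\<lambda>t. f t = h (qcoord \<sigma> t)) (at_arc U)"
proof -
  have rapid: "\<forall>c\<in>U. rapid_at c f"
    using assms(2) rapid_section_iff[OF U_sphere] by blast
  then have "moderate_section U f"
    using assms(1) rapid_imp_moderate_at moderate_section_iff[OF U_sphere] per_section_def by blast
  then obtain \<rho> h where "\<rho> > 0" and h: "h holomorphic_on ball 0 \<rho>"
    and fh: "eventually (\<lambda>t. f t = h (qcoord \<sigma> t)) (at_arc U)"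
    using moderate_periodic_extends[OF assms(1)] by blast
  obtain c where c: "c \<in> U"
    using U_nonempty by blast
  from eventually_at_arc_imp_at_dir[OF fh c] have "eventually (\<lambda>t. h (qcoord \<sigma> t) = f t) (at_dir c)"
    by (rule eventually_mono) simp
  with tendsto_comp_qcoord[OF \<open>\<rho> > 0\<close> h c] have "(f \<longlongrightarrow> h 0) (at_dir c)"
    by (rule Lim_transform_eventually)
  moreover have "(f \<longlongrightarrow> 0) (at_dir c)"
    using rapid c by (blast intro: rapid_at_tendsto_zero)
  ultimately have "h 0 = 0"
    by (rule tendsto_unique[OF at_dir_neq_bot[OF norm_of_dir[OF c]]])
  then show ?thesis
    using \<open>\<rho> > 0\<close> h fh by blast
qed

lemma rapid_if_extends:
  assumes "\<rho> > 0" "h holomorphic_on ball 0 \<rho>" "h 0 = 0"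
    and fh: "eventually (\<lambda>t. f t = h (qcoord \<sigma> t)) (at_arc U)"
  shows "per_section U f \<and> rapid_section U f"
proof -
  obtain M where M: "eventually (\<lambda>z. norm (h z) \<le> M * norm z) (at 0)"
    using eventually_linear_bound_at_zero[OF holomorphic_on_imp_differentiable_at[OF assms(2)] assms(3)]
      assms(1) by auto
  have "rapid_at c f" if "c \<in> U" for c
  proof (rule rapid_at_mono[OF rapid_at_qcoord[OF sigma decay[OF that]]])
    have "eventually (\<lambda>t. norm (h (qcoord \<sigma> t)) \<le> M * norm (qcoord \<sigma> t)) (at_dir c)"
      using eventually_compose_filterlim[OF M filterlim_qcoord_at_dir[OF sigma decay[OF that]]] .
    moreover have "eventually (\<lambda>t. f t = h (qcoord \<sigma> t)) (at_dir c)"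
      using fh that by (rule eventually_at_arc_imp_at_dir)
    ultimately show "eventually (\<lambda>t. norm (f t) \<le> M * norm (qcoord \<sigma> t)) (at_dir c)"
      by eventually_elim auto
  qed
  moreover have "per_section U f"
    using per_section_if_extends[OF assms(1,2) fh] .
  ultimately show ?thesis
    using rapid_section_iff[OF U_sphere] per_section_def by blast
qed

lemma moderate_iff_extends:
  "per_section U f \<and> moderate_section U f \<longleftrightarrow>
    (\<exists>\<rho>>0. \<exists>h. h holomorphic_on ball 0 \<rho> \<and> eventually (\<lambda>t. f t = h (qcoord \<sigma> t)) (at_arc U))"
  using moderate_periodic_extends moderate_if_extends by blast

lemma rapid_iff_extends:
  "per_section U f \<and> rapid_section U f \<longleftrightarrow>
    (\<exists>\<rho>>0. \<exists>h. h holomorphic_on ball 0 \<rho> \<and> h 0 = 0 \<and> eventually (\<lambda>t. f t = h (qcoord \<sigma> t)) (at_arc U))"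
  using rapid_periodic_extends rapid_if_extends by blast

theorem punctured_germ_description_qcoord: "punctured_germ_description U (qcoord \<sigma>)"
  unfolding punctured_germ_description_def germ_eq_iff[OF U_sphere] moderate_iff_extends rapid_iff_extends
  by (auto intro: per_section_comp germ_determines_function periodic_section_descends)

end

section \<open>Arcs through a real direction\<close>

locale real_dir_arc =
  fixes U :: "complex set" and c0 :: complex
  assumes U_sphere: "U \<subseteq> sphere 0 1" and U_connected: "connected U"
    and c0_in: "c0 \<in> U" and c0_real: "c0 \<in> {1, -1}"
begin

lemma norm_c0: "norm c0 = 1"
  using c0_real by auto

lemma per_section_comp: "g holomorphic_on UNIV - {0} \<Longrightarrow> per_section U (\<lambda>t. g (qcoord 1 t))"
  by (rule per_section_comp_qcoord[OF U_sphere]) (auto simp: qcoord_def)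

lemma germ_determines_function:
  assumes "eventually (\<lambda>t. g1 (qcoord 1 t) = g2 (qcoord 1 t)) (at_arc U)" and "z \<noteq> 0"
  shows "g1 z = g2 z"
proof -
  have "\<exists>R>0. \<exists>\<kappa>>0. \<forall>s\<in>trunc_cone c0 R \<kappa>. g1 (qcoord 1 (inverse s)) = g2 (qcoord 1 (inverse s))"
    using assms(1) c0_in by (intro eventually_at_dir_imp_trunc_cone norm_c0) (auto simp: eventually_at_arc)
  then obtain R \<kappa> where "\<kappa> > 0" and eq: "\<forall>s\<in>trunc_cone c0 R \<kappa>. g1 (qexp 1 s) = g2 (qexp 1 s)"
    by auto
  obtain s where "s \<in> trunc_cone c0 R \<kappa>" "qexp 1 s = z"
    using qexp_trunc_cone_covers_punctured_plane[OF c0_real \<open>\<kappa> > 0\<close> assms(2)] by blast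
  then show ?thesis
    using eq by blast
qed

lemma periodic_section_descends:
  assumes "per_section U f"
  shows "\<exists>g. g holomorphic_on UNIV - {0} \<and> eventually (\<lambda>t. f t = g (qcoord 1 t)) (at_arc U)"
proof -
  have per: "eventually (\<lambda>t. f field_differentiable (at t) \<and> f (t / (1 + t)) = f t) (at_arc U)"
    using assms per_section_iff[OF U_sphere] by blast
  then obtain R \<kappa> where "R > 0" "\<kappa> > 0" and P: "\<forall>s\<in>trunc_cone c0 R \<kappa>. f field_differentiable (at (inverse s))
      \<and> f (inverse s / (1 + inverse s)) = f (inverse s)"
    using c0_in eventually_at_dir_imp_trunc_cone[OF norm_c0] unfolding eventually_at_arc by blast
  obtain g where g: "g holomorphic_on qexp 1 ` trunc_cone c0 R \<kappa>"
    and fg: "\<forall>s\<in>trunc_cone c0 R \<kappa>. f (inverse s) = g (qexp 1 s)"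
    using periodic_descends_on_trunc_cone[of 1, OF _ \<open>R > 0\<close> P] by auto
  have "UNIV - {0} \<subseteq> qexp 1 ` trunc_cone c0 R \<kappa>"
    using qexp_trunc_cone_covers_punctured_plane[OF c0_real \<open>\<kappa> > 0\<close>] by blast
  then have gU: "g holomorphic_on UNIV - {0}"
    using g by (rule holomorphic_on_subset[rotated])
  have "eventually (\<lambda>t. inverse t \<in> trunc_cone c0 R \<kappa>) (at_dir c0)"
    by (rule eventually_at_dir_inverse_in_trunc_cone[OF norm_c0 \<open>R > 0\<close> \<open>\<kappa> > 0\<close>])
  then have "eventually (\<lambda>t. f t = g (qcoord 1 t)) (at_dir c0)"
    by (rule eventually_mono) (use fg in \<open>metis inverse_inverse_eq qcoord_def\<close>)
  moreover have "eventually (\<lambda>t. (f field_differentiable (at t) \<and> f (t / (1 + t)) = f t)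
      \<and> qcoord 1 t \<in> UNIV - {0}) (at_arc U)"
    using per by (simp add: qcoord_def)
  ultimately have "eventually (\<lambda>t. f t = g (qcoord 1 t)) (at_arc U)"
    by (intro agreement_propagates_along_arc[OF U_sphere U_connected _ gU _ c0_in]) auto
  then show ?thesis
    using gU by blast
qed

text \<open>Near \<open>c0\<close> there are directions on both sides of the real axis. Moderate growth there makes
  \<open>0\<close> (via \<open>qcoord 1\<close>, which decays below the axis) and \<open>\<infinity>\<close> (via \<open>qcoord (-1) = 1 / qcoord 1\<close>,
  which decays above it) removable singularities, so Liouville applies.\<close>
lemma moderate_periodic_constant:
  assumes "per_section U f" "moderate_section U f"
  shows "\<exists>k. eventually (\<lambda>t. f t = k) (at_arc U)"
proof -
  obtain g where g: "g holomorphic_on UNIV - {0}" and fg: "eventually (\<lambda>t. f t = g (qcoord 1 t)) (at_arc U)"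
    using periodic_section_descends[OF assms(1)] by blast
  have "moderate_at c0 f"
    using assms(2) c0_in moderate_section_iff[OF U_sphere] by blast
  then have "moderate_at c0 (\<lambda>t. g (qcoord 1 t))"
    using eventually_at_arc_imp_at_dir[OF fg c0_in] by (rule moderate_at_cong)
  then obtain e where "e > 0" and near: "\<And>c. norm (c - c0) < e \<Longrightarrow> moderate_at c (\<lambda>t. g (qcoord 1 t))"
    using moderate_at_nearby by blast
  obtain c1 c2 where c: "norm c1 = 1" "norm c2 = 1" "norm (c1 - c0) < e" "norm (c2 - c0) < e"
    "Im c1 < 0" "0 < Im c2"
    using nearby_dirs_on_both_sides[OF c0_real \<open>e > 0\<close>] by blast
  have g1: "g holomorphic_on ball 0 1 - {0}"
    using g by (rule holomorphic_on_subset) auto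
  obtain h1 where h1: "h1 holomorphic_on ball 0 1" "\<forall>z\<in>ball 0 1 - {0}. h1 z = g z"
    using removable_singularity_if_moderate_at[of 1, OF _ c(1) _ _ g1 near[OF c(3)]] c(5) by auto
  have "(g \<circ> inverse) holomorphic_on ball 0 1 - {0}"
    by (rule holomorphic_on_compose_gen[OF _ g]) (auto intro!: holomorphic_intros)
  moreover have "moderate_at c2 (\<lambda>t. (g \<circ> inverse) (qcoord (-1) t))"
    using near[OF c(4)] by (simp add: qcoord_def qexp_minus_one)
  ultimately have "\<exists>h. h holomorphic_on ball 0 1 \<and> (\<forall>z\<in>ball 0 1 - {0}. h z = (g \<circ> inverse) z)"
    using c(6) by (intro removable_singularity_if_moderate_at[OF _ c(2)]) (auto simp: o_def)
  then obtain h2 where h2: "h2 holomorphic_on ball 0 1" "\<forall>z\<in>ball 0 1 - {0}. h2 z = g (inverse z)"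
    by auto
  obtain k where k: "\<forall>z. z \<noteq> 0 \<longrightarrow> g z = k"
    using constant_if_removable_at_zero_and_infinity[OF g h1 h2] by blast
  from fg have "eventually (\<lambda>t. f t = k) (at_arc U)"
    by (rule eventually_mono) (use k in \<open>simp add: qcoord_def\<close>)
  then show ?thesis
    by blast
qed

lemma moderate_if_constant:
  assumes "eventually (\<lambda>t. f t = k) (at_arc U)"
  shows "per_section U f \<and> moderate_section U f"
proof -
  have "per_section U (\<lambda>t. k)"
    using per_section_comp[of "\<lambda>z. k"] by simp
  moreover have "eventually (\<lambda>t. k = f t) (at_arc U)"
    using assms by (rule eventually_mono) simp
  ultimately have "per_section U f"
    by (rule per_section_cong[OF U_sphere])
  moreover have "moderate_at c f" if "c \<in> U" for c
  proof (rule moderate_at_mono[OF moderate_at_const[of c k]])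
    show "eventually (\<lambda>t. norm (f t) \<le> norm k) (at_dir c)"
      using assms that unfolding eventually_at_arc by (auto elim: eventually_mono)
  qed
  ultimately show ?thesis
    using moderate_section_iff[OF U_sphere] per_section_def by blast
qed

lemma rapid_periodic_zero:
  assumes "per_section U f" "rapid_section U f"
  shows "eventually (\<lambda>t. f t = 0) (at_arc U)"
proof -
  have "rapid_at c0 f"
    using assms(2) c0_in rapid_section_iff[OF U_sphere] by blast
  have "moderate_section U f"
    using assms rapid_imp_moderate_at rapid_section_iff[OF U_sphere] moderate_section_iff[OF U_sphere]
    by blast
  then obtain k where fk: "eventually (\<lambda>t. f t = k) (at_arc U)"
    using moderate_periodic_constant[OF assms(1)] by blast
  then have "eventually (\<lambda>t. f t = k) (at_dir c0)"
    using c0_in by (rule eventually_at_arc_imp_at_dir)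
  then have "(f \<longlongrightarrow> k) (at_dir c0)"
    by (rule tendsto_eventually)
  moreover have "(f \<longlongrightarrow> 0) (at_dir c0)"
    by (rule rapid_at_tendsto_zero[OF \<open>rapid_at c0 f\<close>])
  ultimately have "k = 0"
    by (rule tendsto_unique[OF at_dir_neq_bot[OF norm_c0]])
  then show ?thesis
    using fk by simp
qed

lemma rapid_if_zero:
  assumes "eventually (\<lambda>t. f t = 0) (at_arc U)"
  shows "per_section U f \<and> rapid_section U f"
proof -
  have "rapid_at c f" if "c \<in> U" for c
  proof (rule rapid_at_mono[OF rapid_at_zero[of c], of _ 1])
    show "eventually (\<lambda>t. norm (f t) \<le> 1 * norm (0::complex)) (at_dir c)"
      using assms that unfolding eventually_at_arc by (auto elim: eventually_mono)
  qed
  then show ?thesis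
    using moderate_if_constant[OF assms] rapid_section_iff[OF U_sphere] per_section_def by blast
qed

theorem entire_u_description: "entire_u_description U"
  unfolding entire_u_description_def ucoord_eq_qcoord germ_eq_iff[OF U_sphere]
  using per_section_comp germ_determines_function periodic_section_descends
    moderate_periodic_constant moderate_if_constant rapid_periodic_zero rapid_if_zero
  by blast

end

theorem lemma2p2:
  fixes U :: "complex set"
  assumes "U \<subseteq> sphere 0 1"
    and "openin (top_of_set (sphere 0 1)) U"
    and "connected U"
    and "U \<noteq> {}"
  shows "(U \<subseteq> arc_dir 0 pi \<longrightarrow> punctured_germ_description U vcoord)
       \<and> (U \<subseteq> arc_dir (- pi) 0 \<longrightarrow> punctured_germ_description U ucoord)
       \<and> ((1 \<in> U \<or> -1 \<in> U) \<longrightarrow> entire_u_description U)"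
proof (intro conjI impI)
  assume "U \<subseteq> arc_dir 0 pi"
  then have "decaying_arc (-1) U"
    using assms Im_pos_if_in_upper_arc by unfold_locales auto
  then show "punctured_germ_description U vcoord"
    unfolding vcoord_eq_qcoord by (rule decaying_arc.punctured_germ_description_qcoord)
next
  assume "U \<subseteq> arc_dir (- pi) 0"
  then have "decaying_arc 1 U"
    using assms Im_neg_if_in_lower_arc by unfold_locales auto
  then show "punctured_germ_description U ucoord"
    unfolding ucoord_eq_qcoord by (rule decaying_arc.punctured_germ_description_qcoord)
next
  assume "1 \<in> U \<or> -1 \<in> U"
  then obtain c0 where "c0 \<in> U" "c0 \<in> {1, -1}"
    by blast
  then have "real_dir_arc U c0"
    using assms by unfold_locales auto
  then show "entire_u_description U"
    by (rule real_dir_arc.entire_u_description)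
qed

end
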